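(* Let $H$ be a numerical semigroup whose minimal generating set is an arithmetic sequence $a_1<a_2<\dots<a_n$ (i.e. $a_{i+1}-a_i=d$ for a fixed $d$ and all $i$). Then $I_H^*$ is minimally generated by its reduced Gröbner basis with respect to the degree reverse lexicographic order induced by $x_1>x_2>\dots>x_n$.
   Context: A numerical semigroup is a submonoid of $\mathbb{N}$ with finite complement. $K$ is a field, $S=K[x_1,\dots,x_n]$, $I_H=\ker(S\to K[t],\ x_i\mapsto t^{a_i})$. For $0\ne f\in S$, $f^*$ is its homogeneous component of least degree, and $I_H^*=(f^*:0\ne f\in I_H)$. *)

theory Defs
  imports "HOL-Library.Poly_Mapping" "HOL-Computational_Algebra.Polynomial"
begin

(* Multivariate polynomials over a field K: finitely supported maps from
exponent vectors (nat <Rightarrow><^sub>0 nat) to coefficients; the variable x_(i+1) of the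
paper is index i. The ring S = K[x_1,...,x_n] is the set of polynomials whose
monomials only involve the indices 0..n-1. *)

type_synonym 'k mpoly = "(nat \<Rightarrow>\<^sub>0 nat) \<Rightarrow>\<^sub>0 'k"

definition in_S :: "nat \<Rightarrow> 'k::field mpoly \<Rightarrow> bool" where
  "in_S n p \<longleftrightarrow> (\<forall>\<alpha>\<in>Poly_Mapping.keys p. Poly_Mapping.keys \<alpha> \<subseteq> {..<n})"

definition tdeg :: "(nat \<Rightarrow>\<^sub>0 nat) \<Rightarrow> nat" where
  "tdeg \<alpha> = (\<Sum>i\<in>Poly_Mapping.keys \<alpha>. Poly_Mapping.lookup \<alpha> i)"

definition mdvd :: "(nat \<Rightarrow>\<^sub>0 nat) \<Rightarrow> (nat \<Rightarrow>\<^sub>0 nat) \<Rightarrow> bool" where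
  "mdvd \<alpha> \<beta> \<longleftrightarrow> (\<forall>i. Poly_Mapping.lookup \<alpha> i \<le> Poly_Mapping.lookup \<beta> i)"

(* The K-algebra map S <rightarrow> K[t], x_i <mapsto> t^(a_i). *)
definition sg_eval :: "(nat \<Rightarrow> nat) \<Rightarrow> 'k::field mpoly \<Rightarrow> 'k poly" where
  "sg_eval a p = (\<Sum>\<alpha>\<in>Poly_Mapping.keys p.
      monom (Poly_Mapping.lookup p \<alpha>)
            (\<Sum>i\<in>Poly_Mapping.keys \<alpha>. Poly_Mapping.lookup \<alpha> i * a i))"

definition toric_ideal :: "nat \<Rightarrow> (nat \<Rightarrow> nat) \<Rightarrow> 'k::field mpoly set" where
  "toric_ideal n a = {p. in_S n p \<and> sg_eval a p = 0}"

definition ideal_gen :: "nat \<Rightarrow> 'k::field mpoly set \<Rightarrow> 'k mpoly set" where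
  "ideal_gen n G = {p. \<exists>F h. finite F \<and> F \<subseteq> G \<and> (\<forall>g\<in>F. in_S n (h g)) \<and>
                          p = (\<Sum>g\<in>F. h g * g)}"

definition initial_form :: "'k::field mpoly \<Rightarrow> 'k mpoly" where
  "initial_form f =
     (let m = Min (tdeg ` Poly_Mapping.keys f)
      in (\<Sum>\<alpha>\<in>{\<alpha>\<in>Poly_Mapping.keys f. tdeg \<alpha> = m}.
            Poly_Mapping.single \<alpha> (Poly_Mapping.lookup f \<alpha>)))"

definition tangent_cone_ideal :: "nat \<Rightarrow> 'k::field mpoly set \<Rightarrow> 'k mpoly set" where
  "tangent_cone_ideal n I = ideal_gen n {initial_form f | f. f \<in> I \<and> f \<noteq> 0}"

(* Degree reverse lexicographic order with x_1 > x_2 > ... (index 0 > index 1 > ...):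
  drl_less <beta> <alpha> means <beta> < <alpha>: either tdeg <beta> < tdeg <alpha>, or equal degree and at the
  largest index i where they differ, <alpha> has the smaller exponent. *)
definition drl_less :: "(nat \<Rightarrow>\<^sub>0 nat) \<Rightarrow> (nat \<Rightarrow>\<^sub>0 nat) \<Rightarrow> bool" where
  "drl_less \<beta> \<alpha> \<longleftrightarrow> tdeg \<beta> < tdeg \<alpha> \<or>
     (tdeg \<beta> = tdeg \<alpha> \<and> \<alpha> \<noteq> \<beta> \<and>
      (let i = Max {j. Poly_Mapping.lookup \<alpha> j \<noteq> Poly_Mapping.lookup \<beta> j}
       in Poly_Mapping.lookup \<alpha> i < Poly_Mapping.lookup \<beta> i))"

definition lm :: "'k::field mpoly \<Rightarrow> (nat \<Rightarrow>\<^sub>0 nat)" where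
  "lm f = (THE \<alpha>. \<alpha> \<in> Poly_Mapping.keys f \<and>
             (\<forall>\<beta>\<in>Poly_Mapping.keys f. \<beta> \<noteq> \<alpha> \<longrightarrow> drl_less \<beta> \<alpha>))"

definition lc :: "'k::field mpoly \<Rightarrow> 'k" where
  "lc f = Poly_Mapping.lookup f (lm f)"

definition is_groebner_basis :: "'k::field mpoly set \<Rightarrow> 'k mpoly set \<Rightarrow> bool" where
  "is_groebner_basis I G \<longleftrightarrow> finite G \<and> G \<subseteq> I \<and> 0 \<notin> G \<and>
     (\<forall>f\<in>I. f \<noteq> 0 \<longrightarrow> (\<exists>g\<in>G. mdvd (lm g) (lm f)))"

definition is_reduced_groebner_basis :: "'k::field mpoly set \<Rightarrow> 'k mpoly set \<Rightarrow> bool" where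
  "is_reduced_groebner_basis I G \<longleftrightarrow> is_groebner_basis I G \<and>
     (\<forall>g\<in>G. lc g = 1 \<and>
        (\<forall>g'\<in>G. g' \<noteq> g \<longrightarrow> (\<forall>\<alpha>\<in>Poly_Mapping.keys g. \<not> mdvd (lm g') \<alpha>)))"

definition minimally_generates :: "nat \<Rightarrow> 'k::field mpoly set \<Rightarrow> 'k mpoly set \<Rightarrow> bool" where
  "minimally_generates n G I \<longleftrightarrow> ideal_gen n G = I \<and> (\<forall>g\<in>G. ideal_gen n (G - {g}) \<noteq> I)"

definition sg_generated :: "nat set \<Rightarrow> nat set" where
  "sg_generated A = {x. \<exists>c. x = (\<Sum>b\<in>A. c b * b)}"

end

(*
  Write a_i = a_0 + i d (indices from 0).  The monomial x^\<alpha> is sent to t^w with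
  w = a_0 |\<alpha>| + d \<Sigma>_i i \<alpha>_i, so its weight is governed by its total degree |\<alpha>| and its index
  degree \<Sigma>_i i \<alpha>_i.  If no monomial of weight h has degree above D, then in every element of
  I_H^* the coefficients of the monomials of degree D and weight h sum to zero, since initial
  forms of kernel elements keep these coefficients.  As a_0 and d are coprime, this applies to
  every monomial of index degree below a_0; conversely, monomials of index degree at least a_0
  lie in I_H^*, and so do the quadrics x_i x_j - x_(i-1) x_(j+1), with leading monomial x_i x_j.

  Hence in the reduced Groebner basis G every monomial of degree at least 3 contains at most one
  of the inner variables x_1, ..., x_(n-2), and is then determined by its degree and index
  degree.  For g in G of degree at least 3, the sum of the coefficients on the monomials of the
  degree and weight of lm g is 1 on g but vanishes on the ideal generated by G - {g}; in degree 2
  the coefficient of lm g alone does this.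
*)

theory Submission
  imports Defs
begin

abbreviation lookup :: "('a \<Rightarrow>\<^sub>0 'b::zero) \<Rightarrow> 'a \<Rightarrow> 'b"
  where "lookup \<equiv> Poly_Mapping.lookup"

abbreviation keys :: "('a \<Rightarrow>\<^sub>0 'b::zero) \<Rightarrow> 'a set"
  where "keys \<equiv> Poly_Mapping.keys"

abbreviation single :: "'a \<Rightarrow> 'b::zero \<Rightarrow> 'a \<Rightarrow>\<^sub>0 'b"
  where "single \<equiv> Poly_Mapping.single"

section \<open>Monomials\<close>

definition wdeg :: "(nat \<Rightarrow> nat) \<Rightarrow> (nat \<Rightarrow>\<^sub>0 nat) \<Rightarrow> nat" where
  "wdeg f \<alpha> = (\<Sum>i\<in>keys \<alpha>. lookup \<alpha> i * f i)"

lemma wdeg_add: "wdeg f (\<alpha> + \<beta>) = wdeg f \<alpha> + wdeg f \<beta>"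
  unfolding wdeg_def by (rule setsum_keys_plus_distrib) (auto simp: algebra_simps)

lemma wdeg_single: "wdeg f (single i k) = k * f i"
  unfolding wdeg_def by (cases "k=0") auto

lemma wdeg_zero[simp]: "wdeg f 0 = 0"
  unfolding wdeg_def by simp

lemma wdeg_superset: "finite A \<Longrightarrow> keys \<alpha> \<subseteq> A \<Longrightarrow> wdeg f \<alpha> = (\<Sum>i\<in>A. lookup \<alpha> i * f i)"
  unfolding wdeg_def by (rule sum.mono_neutral_left) (auto simp: in_keys_iff)

lemma tdeg_wdeg: "tdeg \<alpha> = wdeg (\<lambda>_. 1) \<alpha>"
  unfolding tdeg_def wdeg_def by simp

lemma tdeg_add: "tdeg (\<alpha> + \<beta>) = tdeg \<alpha> + tdeg \<beta>"
  by (simp add: tdeg_wdeg wdeg_add)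

lemma tdeg_single: "tdeg (single i k) = k"
  by (simp add: tdeg_wdeg wdeg_single)

lemma tdeg_zero[simp]: "tdeg 0 = 0"
  by (simp add: tdeg_wdeg)

lemma tdeg_eq_0: "tdeg \<alpha> = 0 \<longleftrightarrow> \<alpha> = 0"
proof
  assume "tdeg \<alpha> = 0"
  then have "\<forall>i\<in>keys \<alpha>. lookup \<alpha> i = 0" unfolding tdeg_def by simp
  then show "\<alpha> = 0" by (metis in_keys_iff keys_eq_empty equals0I)
qed simp

lemma keys_add_nat: "keys (\<alpha> + \<beta> :: nat \<Rightarrow>\<^sub>0 nat) = keys \<alpha> \<union> keys \<beta>"
  by (auto simp: in_keys_iff lookup_add)

lemma lookup_le_tdeg: "lookup \<alpha> i \<le> tdeg \<alpha>"
proof (cases "i \<in> keys \<alpha>")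
  case True
  then show ?thesis unfolding tdeg_def by (intro member_le_sum) auto
qed (simp add: in_keys_iff)

lemma mdvd_diff_add: "mdvd \<beta> \<alpha> \<Longrightarrow> (\<alpha> - \<beta>) + \<beta> = \<alpha>"
  unfolding mdvd_def by (intro poly_mapping_eqI) (simp add: lookup_add lookup_minus)

lemma keys_diff_subset: "keys ((\<alpha>::nat\<Rightarrow>\<^sub>0nat) - \<beta>) \<subseteq> keys \<alpha>"
  by (auto simp: in_keys_iff lookup_minus)

lemma mdvd_refl: "mdvd \<alpha> \<alpha>"
  unfolding mdvd_def by simp

lemma mdvd_trans: "mdvd \<alpha> \<beta> \<Longrightarrow> mdvd \<beta> \<gamma> \<Longrightarrow> mdvd \<alpha> \<gamma>"
  unfolding mdvd_def using le_trans by blast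

lemma tdeg_le_if_mdvd: "mdvd \<alpha> \<beta> \<Longrightarrow> tdeg \<alpha> \<le> tdeg \<beta>"
  using mdvd_diff_add[of \<alpha> \<beta>] tdeg_add[of "\<beta> - \<alpha>" \<alpha>] by simp

lemma mdvd_eq_if_tdeg_le: "mdvd \<alpha> \<beta> \<Longrightarrow> tdeg \<beta> \<le> tdeg \<alpha> \<Longrightarrow> \<alpha> = \<beta>"
proof -
  assume dv: "mdvd \<alpha> \<beta>" and le: "tdeg \<beta> \<le> tdeg \<alpha>"
  have e: "(\<beta> - \<alpha>) + \<alpha> = \<beta>" by (rule mdvd_diff_add[OF dv])
  then have "tdeg (\<beta> - \<alpha>) + tdeg \<alpha> = tdeg \<beta>" by (metis tdeg_add)
  then have "tdeg (\<beta> - \<alpha>) = 0" using le by simp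
  then have "\<beta> - \<alpha> = 0" by (simp add: tdeg_eq_0)
  then show "\<alpha> = \<beta>" using e by simp
qed

lemma mdvd_diff_left: "mdvd (\<beta> - \<alpha>) \<beta>"
  unfolding mdvd_def by (simp add: lookup_minus)

lemma tdeg_eq_1_imp_single:
  assumes "tdeg \<alpha> = 1" shows "\<exists>i. i \<in> keys \<alpha> \<and> \<alpha> = single i 1"
proof -
  have "\<alpha> \<noteq> 0" using assms by auto
  then obtain i where i: "i \<in> keys \<alpha>" by (metis all_not_in_conv keys_eq_empty)
  have fin: "finite (keys \<alpha>)" by simp
  have "tdeg \<alpha> = lookup \<alpha> i + (\<Sum>j\<in>keys \<alpha> - {i}. lookup \<alpha> j)"
    unfolding tdeg_def using sum.remove[OF fin i] by simp
  moreover have "lookup \<alpha> i \<ge> 1" using i by (simp add: in_keys_iff)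
  ultimately have li: "lookup \<alpha> i = 1" and rest: "(\<Sum>j\<in>keys \<alpha> - {i}. lookup \<alpha> j) = 0" using assms by linarith+
  have "\<forall>j\<in>keys \<alpha> - {i}. lookup \<alpha> j = 0" using rest by simp
  then have others: "j \<noteq> i \<Longrightarrow> lookup \<alpha> j = 0" for j by (auto simp: in_keys_iff)
  have "\<alpha> = single i 1"
  proof (rule poly_mapping_eqI)
    fix j show "lookup \<alpha> j = lookup (single i 1) j"
      by (cases "j = i") (simp_all add: li others lookup_single_not_eq)
  qed
  then show ?thesis using i by blast
qed

section \<open>Sums of coefficients over sets of monomials\<close>

definition coeff_sum :: "(nat \<Rightarrow>\<^sub>0 nat) set \<Rightarrow> 'k::field mpoly \<Rightarrow> 'k" where
  "coeff_sum S p = (\<Sum>\<alpha>\<in>keys p \<inter> S. lookup p \<alpha>)"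

lemma coeff_sum_superset: "finite A \<Longrightarrow> keys p \<subseteq> A \<Longrightarrow> coeff_sum S p = (\<Sum>\<alpha>\<in>A \<inter> S. lookup p \<alpha>)"
  unfolding coeff_sum_def by (rule sum.mono_neutral_left) (auto simp: in_keys_iff)

lemma coeff_sum_add: "coeff_sum S (p + q) = coeff_sum S p + coeff_sum S q"
proof -
  let ?A = "keys p \<union> keys q"
  have f: "finite ?A" by simp
  have "coeff_sum S (p + q) = (\<Sum>\<alpha>\<in>?A \<inter> S. lookup (p+q) \<alpha>)"
    by (rule coeff_sum_superset[OF f]) (rule keys_add)
  also have "\<dots> = (\<Sum>\<alpha>\<in>?A \<inter> S. lookup p \<alpha>) + (\<Sum>\<alpha>\<in>?A \<inter> S. lookup q \<alpha>)"
    by (simp add: lookup_add sum.distrib)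
  also have "\<dots> = coeff_sum S p + coeff_sum S q"
    using coeff_sum_superset[OF f, of p S] coeff_sum_superset[OF f, of q S] by auto
  finally show ?thesis .
qed

lemma coeff_sum_zero[simp]: "coeff_sum S 0 = 0"
  unfolding coeff_sum_def by simp

lemma coeff_sum_sum: "finite F \<Longrightarrow> coeff_sum S (\<Sum>x\<in>F. f x) = (\<Sum>x\<in>F. coeff_sum S (f x))"
  by (induction F rule: finite_induct) (auto simp: coeff_sum_add)

lemma coeff_sum_empty: "keys p \<inter> S = {} \<Longrightarrow> coeff_sum S p = 0"
  unfolding coeff_sum_def by simp

lemma coeff_sum_singleton: "coeff_sum {\<alpha>} p = lookup p \<alpha>"
  unfolding coeff_sum_def by (cases "\<alpha> \<in> keys p") (auto simp: in_keys_iff)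

lemma poly_mapping_sum_single: "p = (\<Sum>\<alpha>\<in>keys p. single \<alpha> (lookup p \<alpha>))"
proof (rule poly_mapping_eqI)
  fix \<beta>
  have "lookup (\<Sum>\<alpha>\<in>keys p. single \<alpha> (lookup p \<alpha>)) \<beta> = (\<Sum>\<alpha>\<in>keys p. (if \<beta> = \<alpha> then lookup p \<alpha> else 0))"
    by (simp add: lookup_sum lookup_single when_def eq_commute)
  also have "\<dots> = lookup p \<beta>"
    by (simp add: sum.delta in_keys_iff)
  finally show "lookup p \<beta> = lookup (\<Sum>\<alpha>\<in>keys p. single \<alpha> (lookup p \<alpha>)) \<beta>" by simp
qed

lemma single_mult_eq_sum:
  "single \<gamma> c * q = (\<Sum>\<delta>\<in>keys q. single (\<gamma> + \<delta>) (c * lookup q \<delta>))"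
proof -
  have "single \<gamma> c * q = single \<gamma> c * (\<Sum>\<delta>\<in>keys q. single \<delta> (lookup q \<delta>))"
    by (subst poly_mapping_sum_single[of q]) simp
  also have "\<dots> = (\<Sum>\<delta>\<in>keys q. single (\<gamma> + \<delta>) (c * lookup q \<delta>))"
    by (simp add: sum_distrib_left mult_single)
  finally show ?thesis .
qed

lemma lookup_single_mult: "lookup (single (\<gamma>::nat\<Rightarrow>\<^sub>0nat) c * q) (\<gamma> + \<delta>) = c * (lookup q \<delta> :: 'k::field)"
proof -
  have "lookup (single \<gamma> c * q) (\<gamma> + \<delta>) = (\<Sum>\<delta>'\<in>keys q. (if \<gamma> + \<delta>' = \<gamma> + \<delta> then c * lookup q \<delta>' else 0))"
    by (subst single_mult_eq_sum) (simp add: lookup_sum lookup_single when_def)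
  also have "\<dots> = (\<Sum>\<delta>'\<in>keys q. (if \<delta>' = \<delta> then c * lookup q \<delta>' else 0))"
    by (rule sum.cong) (auto dest: add_left_imp_eq)
  also have "\<dots> = c * lookup q \<delta>" by (simp add: sum.delta in_keys_iff)
  finally show ?thesis .
qed

lemma keys_single_mult_subset: "keys (single \<gamma> c * q) \<subseteq> (\<lambda>\<delta>. \<gamma> + \<delta>) ` keys q"
proof -
  have "keys (single \<gamma> c * q) \<subseteq> (\<Union>\<delta>\<in>keys q. keys (single (\<gamma> + \<delta>) (c * lookup q \<delta>)))"
    by (subst single_mult_eq_sum) (rule keys_sum)
  then show ?thesis by (auto split: if_splits)
qed

lemma coeff_sum_single_mult:
  "coeff_sum S (single \<gamma> c * q) = c * coeff_sum {\<delta>. \<gamma> + \<delta> \<in> S} (q :: 'k::field mpoly)"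
proof -
  have f: "finite ((\<lambda>\<delta>. \<gamma> + \<delta>) ` keys q)" by simp
  have "coeff_sum S (single \<gamma> c * q) = (\<Sum>\<alpha>\<in>((\<lambda>\<delta>. \<gamma> + \<delta>) ` keys q) \<inter> S. lookup (single \<gamma> c * q) \<alpha>)"
    by (rule coeff_sum_superset[OF f keys_single_mult_subset])
  also have "((\<lambda>\<delta>. \<gamma> + \<delta>) ` keys q) \<inter> S = (\<lambda>\<delta>. \<gamma> + \<delta>) ` (keys q \<inter> {\<delta>. \<gamma> + \<delta> \<in> S})"
    by auto
  also have "(\<Sum>\<alpha>\<in>(\<lambda>\<delta>. \<gamma> + \<delta>) ` (keys q \<inter> {\<delta>. \<gamma> + \<delta> \<in> S}). lookup (single \<gamma> c * q) \<alpha>)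
      = (\<Sum>\<delta>\<in>keys q \<inter> {\<delta>. \<gamma> + \<delta> \<in> S}. lookup (single \<gamma> c * q) (\<gamma> + \<delta>))"
    by (rule sum.reindex_cong[where l="\<lambda>\<delta>. \<gamma> + \<delta>"]) (auto simp: inj_on_def)
  also have "\<dots> = c * coeff_sum {\<delta>. \<gamma> + \<delta> \<in> S} q"
    by (simp add: lookup_single_mult coeff_sum_def sum_distrib_left)
  finally show ?thesis .
qed

lemma coeff_sum_mult:
  "coeff_sum S (h * q) = (\<Sum>\<gamma>\<in>keys h. lookup h \<gamma> * coeff_sum {\<delta>. \<gamma> + \<delta> \<in> S} (q :: 'k::field mpoly))"
proof -
  have e: "(\<Sum>\<gamma>\<in>keys h. single \<gamma> (lookup h \<gamma>)) = h" by (rule poly_mapping_sum_single[symmetric])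
  have "h * q = (\<Sum>\<gamma>\<in>keys h. single \<gamma> (lookup h \<gamma>)) * q" using e by simp
  also have "\<dots> = (\<Sum>\<gamma>\<in>keys h. single \<gamma> (lookup h \<gamma>) * q)" by (simp add: sum_distrib_right)
  finally have "coeff_sum S (h * q) = (\<Sum>\<gamma>\<in>keys h. coeff_sum S (single \<gamma> (lookup h \<gamma>) * q))"
    by (simp add: coeff_sum_sum)
  then show ?thesis by (simp add: coeff_sum_single_mult)
qed

lemma coeff_sum_diff: "coeff_sum S (p - q) = coeff_sum S p - coeff_sum S (q :: 'k::field mpoly)"
proof -
  have "coeff_sum S p = coeff_sum S ((p - q) + q)" by simp
  also have "\<dots> = coeff_sum S (p - q) + coeff_sum S q" by (rule coeff_sum_add)
  finally show ?thesis by simp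
qed

lemma coeff_sum_single: "coeff_sum S (single \<alpha> c) = (if \<alpha> \<in> S then c else 0)"
  unfolding coeff_sum_def by (cases "c = 0") auto

section \<open>Ideals of S\<close>

lemma in_S_add: "in_S n p \<Longrightarrow> in_S n q \<Longrightarrow> in_S n (p + q)"
  unfolding in_S_def using keys_add[of p q] by (meson Un_iff subsetD)

lemma in_S_zero[simp]: "in_S n 0"
  unfolding in_S_def by simp

lemma in_S_sum: "(\<And>x. x \<in> F \<Longrightarrow> in_S n (f x)) \<Longrightarrow> in_S n (\<Sum>x\<in>F. f x)"
  by (induction F rule: infinite_finite_induct) (auto intro: in_S_add)

lemma in_S_mult: "in_S n p \<Longrightarrow> in_S n q \<Longrightarrow> in_S n (p * q)"
  unfolding in_S_def
proof
  fix \<alpha> assume p: "\<forall>\<alpha>\<in>keys p. keys \<alpha> \<subseteq> {..<n}" and q: "\<forall>\<alpha>\<in>keys q. keys \<alpha> \<subseteq> {..<n}"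
    and a: "\<alpha> \<in> keys (p * q)"
  from a keys_mult[of p q] obtain \<beta> \<gamma> where "\<alpha> = \<beta> + \<gamma>" "\<beta> \<in> keys p" "\<gamma> \<in> keys q" by blast
  then show "keys \<alpha> \<subseteq> {..<n}" using p q by (simp add: keys_add_nat)
qed

lemma in_S_single: "keys \<gamma> \<subseteq> {..<n} \<Longrightarrow> in_S n (single \<gamma> c)"
  unfolding in_S_def by simp

lemma in_S_one[simp]: "in_S n 1"
  unfolding in_S_def by simp

lemma in_S_keys: "in_S n p \<Longrightarrow> \<alpha> \<in> keys p \<Longrightarrow> keys \<alpha> \<subseteq> {..<n}"
  unfolding in_S_def by blast

definition is_ideal :: "nat \<Rightarrow> 'k::field mpoly set \<Rightarrow> bool" where
  "is_ideal n J \<longleftrightarrow> 0 \<in> J \<and> (\<forall>p\<in>J. \<forall>q\<in>J. p + q \<in> J) \<and> (\<forall>h p. in_S n h \<longrightarrow> p \<in> J \<longrightarrow> h * p \<in> J)"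

lemma ideal_gen_mem: "x \<in> X \<Longrightarrow> x \<in> ideal_gen n X"
  unfolding ideal_gen_def
proof (rule CollectI, intro exI conjI)
  assume "x \<in> X"
  then show "finite {x}" "{x} \<subseteq> X" "\<forall>g\<in>{x}. in_S n ((\<lambda>_. 1) g)" "x = (\<Sum>g\<in>{x}. (\<lambda>_. 1) g * g)"
    by simp_all
qed

lemma ideal_gen_zero: "0 \<in> ideal_gen n X"
  unfolding ideal_gen_def
proof (rule CollectI, intro exI conjI)
  show "finite {}" "{} \<subseteq> X" "\<forall>g\<in>{}. in_S n ((\<lambda>_. 1) g)" "0 = (\<Sum>g\<in>{}. (\<lambda>_. 1) g * g)"
    by simp_all
qed

lemma ideal_gen_add:
  assumes "p \<in> ideal_gen n X" "q \<in> ideal_gen n X"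
  shows "p + q \<in> ideal_gen n X"
proof -
  from assms(1) obtain F1 h1 where 1: "finite F1" "F1 \<subseteq> X" "\<forall>g\<in>F1. in_S n (h1 g)" "p = (\<Sum>g\<in>F1. h1 g * g)"
    unfolding ideal_gen_def by blast
  from assms(2) obtain F2 h2 where 2: "finite F2" "F2 \<subseteq> X" "\<forall>g\<in>F2. in_S n (h2 g)" "q = (\<Sum>g\<in>F2. h2 g * g)"
    unfolding ideal_gen_def by blast
  define h where "h g = (if g \<in> F1 then h1 g else 0) + (if g \<in> F2 then h2 g else 0)" for g
  have hg: "h g * g = (if g \<in> F1 then h1 g * g else 0) + (if g \<in> F2 then h2 g * g else 0)" for g
    unfolding h_def by (simp add: distrib_right)
  have s1: "(\<Sum>g\<in>F1 \<union> F2. (if g \<in> F1 then h1 g * g else 0)) = p"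
  proof -
    have fin: "finite (F1 \<union> F2)" using 1 2 by simp
    have "(F1 \<union> F2) \<inter> F1 = F1" by blast
    then show ?thesis using 1 sum.inter_restrict[OF fin, of "\<lambda>g. h1 g * g" F1] by simp
  qed
  have s2: "(\<Sum>g\<in>F1 \<union> F2. (if g \<in> F2 then h2 g * g else 0)) = q"
  proof -
    have fin: "finite (F1 \<union> F2)" using 1 2 by simp
    have "(F1 \<union> F2) \<inter> F2 = F2" by blast
    then show ?thesis using 2 sum.inter_restrict[OF fin, of "\<lambda>g. h2 g * g" F2] by simp
  qed
  have "(\<Sum>g\<in>F1 \<union> F2. h g * g) = p + q"
    by (simp only: hg sum.distrib s1 s2)
  then have "p + q = (\<Sum>g\<in>F1 \<union> F2. h g * g)" by simp
  moreover have "\<forall>g\<in>F1 \<union> F2. in_S n (h g)"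
    using 1 2 unfolding h_def by (auto intro: in_S_add)
  ultimately show ?thesis unfolding ideal_gen_def
    by (intro CollectI exI[of _ "F1 \<union> F2"] exI[of _ h] conjI) (use 1 2 in auto)
qed

lemma ideal_gen_mult:
  assumes "p \<in> ideal_gen n X" "in_S n h"
  shows "h * p \<in> ideal_gen n X"
proof -
  from assms(1) obtain F h1 where 1: "finite F" "F \<subseteq> X" "\<forall>g\<in>F. in_S n (h1 g)" "p = (\<Sum>g\<in>F. h1 g * g)"
    unfolding ideal_gen_def by blast
  have "h * p = (\<Sum>g\<in>F. (h * h1 g) * g)" using 1 by (simp add: sum_distrib_left mult.assoc)
  moreover have "\<forall>g\<in>F. in_S n (h * h1 g)" using 1 assms(2) by (auto intro: in_S_mult)
  ultimately show ?thesis unfolding ideal_gen_def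
    by (intro CollectI exI[of _ F] exI[of _ "\<lambda>g. h * h1 g"] conjI) (use 1 in auto)
qed

lemma ideal_gen_is_ideal: "is_ideal n (ideal_gen n X)"
  unfolding is_ideal_def using ideal_gen_zero ideal_gen_add ideal_gen_mult by blast

lemma ideal_sum_mem:
  assumes J: "is_ideal n J"
  shows "finite F \<Longrightarrow> (\<And>g. g \<in> F \<Longrightarrow> in_S n (h g) \<and> g \<in> J) \<Longrightarrow> (\<Sum>g\<in>F. h g * g) \<in> J"
proof (induction F rule: finite_induct)
  case empty then show ?case using J by (simp add: is_ideal_def)
next
  case (insert x F)
  then have "h x * x \<in> J" "(\<Sum>g\<in>F. h g * g) \<in> J" using J unfolding is_ideal_def by auto
  then show ?case using insert.hyps J unfolding is_ideal_def by simp
qed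

lemma ideal_gen_least: "is_ideal n J \<Longrightarrow> X \<subseteq> J \<Longrightarrow> ideal_gen n X \<subseteq> J"
proof
  fix p assume J: "is_ideal n J" "X \<subseteq> J" and "p \<in> ideal_gen n X"
  then obtain F h where 1: "finite F" "F \<subseteq> X" "\<forall>g\<in>F. in_S n (h g)" "p = (\<Sum>g\<in>F. h g * g)"
    unfolding ideal_gen_def by blast
  show "p \<in> J" unfolding 1(4) by (rule ideal_sum_mem[OF J(1) 1(1)]) (use 1 J in blast)
qed

lemma ideal_diff:
  assumes "is_ideal n J" "p \<in> J" "q \<in> J" shows "p - q \<in> J"
proof -
  have "in_S n (single 0 (-1))" by (rule in_S_single) simp
  then have "single 0 (-1) * q \<in> J" using assms unfolding is_ideal_def by blast
  moreover have "single 0 (-1) * q = - q"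
    by (metis mult_minus_left mult_1 single_one single_uminus)
  ultimately have mq: "- q \<in> J" by simp
  have "p + (- q) \<in> J" using assms mq unfolding is_ideal_def by blast
  then show ?thesis by simp
qed

lemma ideal_gen_in_S: "(\<And>x. x \<in> X \<Longrightarrow> in_S n x) \<Longrightarrow> p \<in> ideal_gen n X \<Longrightarrow> in_S n p"
proof -
  assume X: "\<And>x. x \<in> X \<Longrightarrow> in_S n x" and "p \<in> ideal_gen n X"
  then obtain F h where 1: "finite F" "F \<subseteq> X" "\<forall>g\<in>F. in_S n (h g)" "p = (\<Sum>g\<in>F. h g * g)"
    unfolding ideal_gen_def by blast
  show "in_S n p" unfolding 1(4) by (rule in_S_sum, rule in_S_mult) (use 1 X in auto)
qed

lemma ideal_gen_coeff_sum_zero: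
  assumes "\<And>x \<gamma>. x \<in> X \<Longrightarrow> keys \<gamma> \<subseteq> {..<n} \<Longrightarrow> coeff_sum {\<delta>. \<gamma> + \<delta> \<in> S} x = 0"
    and "p \<in> ideal_gen n X"
  shows "coeff_sum S p = 0"
proof -
  from assms(2) obtain F h where 1: "finite F" "F \<subseteq> X" "\<forall>g\<in>F. in_S n (h g)" "p = (\<Sum>g\<in>F. h g * g)"
    unfolding ideal_gen_def by blast
  have "coeff_sum S p = (\<Sum>g\<in>F. \<Sum>\<gamma>\<in>keys (h g). lookup (h g) \<gamma> * coeff_sum {\<delta>. \<gamma> + \<delta> \<in> S} g)"
    using 1 by (simp add: coeff_sum_sum coeff_sum_mult)
  also have "\<dots> = 0"
    using 1 assms(1) by (intro sum.neutral ballI) (auto simp: in_S_def)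
  finally show ?thesis .
qed

section \<open>The degree reverse lexicographic order and Groebner bases\<close>

definition revlex_less :: "(nat \<Rightarrow>\<^sub>0 nat) \<Rightarrow> (nat \<Rightarrow>\<^sub>0 nat) \<Rightarrow> bool" where
  "revlex_less \<beta> \<alpha> \<longleftrightarrow> (\<exists>i. lookup \<alpha> i < lookup \<beta> i \<and> (\<forall>j>i. lookup \<alpha> j = lookup \<beta> j))"

lemma finite_differing_indices: "finite {j. lookup \<alpha> j \<noteq> lookup (\<beta>::nat\<Rightarrow>\<^sub>0nat) j}"
proof (rule finite_subset)
  show "{j. lookup \<alpha> j \<noteq> lookup \<beta> j} \<subseteq> keys \<alpha> \<union> keys \<beta>"
  proof
    fix j assume "j \<in> {j. lookup \<alpha> j \<noteq> lookup \<beta> j}"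
    then have "lookup \<alpha> j \<noteq> 0 \<or> lookup \<beta> j \<noteq> 0" by auto
    then show "j \<in> keys \<alpha> \<union> keys \<beta>" by (simp add: in_keys_iff)
  qed
  show "finite (keys \<alpha> \<union> keys \<beta>)" by simp
qed

lemma max_differing_index:
  fixes \<alpha> \<beta> :: "nat \<Rightarrow>\<^sub>0 nat"
  assumes "\<alpha> \<noteq> \<beta>"
  defines "i \<equiv> Max {j. lookup \<alpha> j \<noteq> lookup \<beta> j}"
  shows "lookup \<alpha> i \<noteq> lookup \<beta> i" "\<And>j. j > i \<Longrightarrow> lookup \<alpha> j = lookup \<beta> j"
proof -
  let ?D = "{j. lookup \<alpha> j \<noteq> lookup \<beta> j}"
  have fin: "finite ?D" by (rule finite_differing_indices)
  have ne: "?D \<noteq> {}"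
  proof
    assume "?D = {}"
    then have "\<forall>j. lookup \<alpha> j = lookup \<beta> j" by blast
    then have "\<alpha> = \<beta>" by (simp add: poly_mapping_eqI)
    then show False using assms(1) by simp
  qed
  have "i \<in> ?D" unfolding i_def using fin ne by (rule Max_in)
  then show "lookup \<alpha> i \<noteq> lookup \<beta> i" by simp
  fix j assume j: "j > i"
  show "lookup \<alpha> j = lookup \<beta> j"
  proof (rule ccontr)
    assume "lookup \<alpha> j \<noteq> lookup \<beta> j"
    then have "j \<in> ?D" by simp
    then have "j \<le> i" unfolding i_def using fin by (rule Max_ge[rotated])
    then show False using j by simp
  qed
qed

lemma revlex_less_iff_max:
  assumes "\<alpha> \<noteq> \<beta>"
  shows "revlex_less \<beta> \<alpha> \<longleftrightarrow> lookup \<alpha> (Max {j. lookup \<alpha> j \<noteq> lookup \<beta> j}) < lookup \<beta> (Max {j. lookup \<alpha> j \<noteq> lookup \<beta> j})"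
proof -
  define i where "i = Max {j. lookup \<alpha> j \<noteq> lookup \<beta> j}"
  have i1: "lookup \<alpha> i \<noteq> lookup \<beta> i" and i2: "\<And>j. j > i \<Longrightarrow> lookup \<alpha> j = lookup \<beta> j"
    using max_differing_index[OF assms] unfolding i_def by blast+
  have "revlex_less \<beta> \<alpha> \<longleftrightarrow> lookup \<alpha> i < lookup \<beta> i"
  proof
    assume "revlex_less \<beta> \<alpha>"
    then obtain k where k1: "lookup \<alpha> k < lookup \<beta> k" and k2: "\<forall>j>k. lookup \<alpha> j = lookup \<beta> j" unfolding revlex_less_def by blast
    have "k = i"
    proof (rule ccontr)
      assume "k \<noteq> i"
      then have "k < i \<or> i < k" by arith
      then show False
      proof
        assume "k < i" then have "lookup \<alpha> i = lookup \<beta> i" using k2 by simp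
        then show False using i1 by simp
      next
        assume "i < k" then have "lookup \<alpha> k = lookup \<beta> k" using i2 by simp
        then show False using k1 by simp
      qed
    qed
    then show "lookup \<alpha> i < lookup \<beta> i" using k1 by simp
  next
    assume "lookup \<alpha> i < lookup \<beta> i"
    then show "revlex_less \<beta> \<alpha>" unfolding revlex_less_def using i2 by blast
  qed
  then show ?thesis unfolding i_def .
qed

lemma drl_less_revlex: "drl_less \<beta> \<alpha> \<longleftrightarrow> tdeg \<beta> < tdeg \<alpha> \<or> (tdeg \<beta> = tdeg \<alpha> \<and> revlex_less \<beta> \<alpha>)"
proof (cases "\<alpha> = \<beta>")
  case True
  have "\<not> revlex_less \<alpha> \<alpha>" unfolding revlex_less_def by simp
  then show ?thesis unfolding drl_less_def using True by simp
next
  case False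
  show ?thesis unfolding drl_less_def Let_def revlex_less_iff_max[OF False] using False by simp
qed

lemma revlex_less_irrefl: "\<not> revlex_less \<alpha> \<alpha>"
  unfolding revlex_less_def by simp

lemma revlex_less_trans:
  assumes "revlex_less \<gamma> \<beta>" "revlex_less \<beta> \<alpha>" shows "revlex_less \<gamma> \<alpha>"
proof -
  obtain i1 where i1: "lookup \<alpha> i1 < lookup \<beta> i1" "\<forall>j>i1. lookup \<alpha> j = lookup \<beta> j" using assms(2) unfolding revlex_less_def by blast
  obtain i2 where i2: "lookup \<beta> i2 < lookup \<gamma> i2" "\<forall>j>i2. lookup \<beta> j = lookup \<gamma> j" using assms(1) unfolding revlex_less_def by blast
  show ?thesis unfolding revlex_less_def
  proof (intro exI conjI allI impI)
    show "lookup \<alpha> (max i1 i2) < lookup \<gamma> (max i1 i2)"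
    proof (cases i1 i2 rule: linorder_cases)
      case less
      then have "max i1 i2 = i2" "lookup \<alpha> i2 = lookup \<beta> i2" using i1(2) by simp_all
      then show ?thesis using i2(1) by simp
    next
      case equal
      then show ?thesis using i1(1) i2(1) by simp
    next
      case greater
      then have "max i1 i2 = i1" "lookup \<beta> i1 = lookup \<gamma> i1" using i2(2) by simp_all
      then show ?thesis using i1(1) by simp
    qed
    fix j assume "max i1 i2 < j"
    then show "lookup \<alpha> j = lookup \<gamma> j" using i1 i2 by simp
  qed
qed

lemma revlex_less_total: "\<alpha> \<noteq> \<beta> \<Longrightarrow> revlex_less \<alpha> \<beta> \<or> revlex_less \<beta> \<alpha>"
proof -
  assume ne: "\<alpha> \<noteq> \<beta>"
  define i where "i = Max {j. lookup \<alpha> j \<noteq> lookup \<beta> j}"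
  have i1: "lookup \<alpha> i \<noteq> lookup \<beta> i" and i2: "\<And>j. j > i \<Longrightarrow> lookup \<alpha> j = lookup \<beta> j"
    using max_differing_index[OF ne] unfolding i_def by blast+
  show ?thesis
  proof (cases "lookup \<alpha> i < lookup \<beta> i")
    case True then show ?thesis unfolding revlex_less_def using i2 by blast
  next
    case False
    then have "lookup \<beta> i < lookup \<alpha> i" using i1 by simp
    moreover have "\<forall>j>i. lookup \<beta> j = lookup \<alpha> j" using i2 by simp
    ultimately show ?thesis unfolding revlex_less_def by blast
  qed
qed

lemma revlex_less_add: "revlex_less (\<beta> + \<gamma>) (\<alpha> + \<gamma>) \<longleftrightarrow> revlex_less \<beta> \<alpha>"
  unfolding revlex_less_def by (simp add: lookup_add)

lemma drl_irrefl: "\<not> drl_less \<alpha> \<alpha>"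
  by (simp add: drl_less_revlex revlex_less_irrefl)

lemma drl_trans: "drl_less \<gamma> \<beta> \<Longrightarrow> drl_less \<beta> \<alpha> \<Longrightarrow> drl_less \<gamma> \<alpha>"
proof -
  assume 1: "drl_less \<gamma> \<beta>" and 2: "drl_less \<beta> \<alpha>"
  have d1: "tdeg \<gamma> < tdeg \<beta> \<or> (tdeg \<gamma> = tdeg \<beta> \<and> revlex_less \<gamma> \<beta>)" using 1 by (simp only: drl_less_revlex)
  have d2: "tdeg \<beta> < tdeg \<alpha> \<or> (tdeg \<beta> = tdeg \<alpha> \<and> revlex_less \<beta> \<alpha>)" using 2 by (simp only: drl_less_revlex)
  show ?thesis
  proof (cases "tdeg \<gamma> = tdeg \<beta> \<and> tdeg \<beta> = tdeg \<alpha>")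
    case True
    then have "revlex_less \<gamma> \<beta>" "revlex_less \<beta> \<alpha>" using d1 d2 by simp_all
    then have "revlex_less \<gamma> \<alpha>" by (rule revlex_less_trans)
    then show ?thesis using True by (simp add: drl_less_revlex)
  next
    case False
    then have "tdeg \<gamma> < tdeg \<alpha>" using d1 d2 by linarith
    then show ?thesis by (simp add: drl_less_revlex)
  qed
qed

lemma drl_total: "\<alpha> \<noteq> \<beta> \<Longrightarrow> drl_less \<alpha> \<beta> \<or> drl_less \<beta> \<alpha>"
proof -
  assume ne: "\<alpha> \<noteq> \<beta>"
  show ?thesis
  proof (cases "tdeg \<alpha> = tdeg \<beta>")
    case True
    then show ?thesis using revlex_less_total[OF ne] by (simp add: drl_less_revlex)
  next
    case False
    then have "tdeg \<alpha> < tdeg \<beta> \<or> tdeg \<beta> < tdeg \<alpha>" by arith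
    then show ?thesis by (auto simp: drl_less_revlex)
  qed
qed

lemma drl_asym: "drl_less \<beta> \<alpha> \<Longrightarrow> \<not> drl_less \<alpha> \<beta>"
proof
  assume "drl_less \<beta> \<alpha>" "drl_less \<alpha> \<beta>"
  then have "drl_less \<beta> \<beta>" by (rule drl_trans)
  then show False using drl_irrefl by simp
qed

lemma drl_add: "drl_less \<beta> \<alpha> \<Longrightarrow> drl_less (\<beta> + \<gamma>) (\<alpha> + \<gamma>)"
  unfolding drl_less_revlex by (auto simp: tdeg_add revlex_less_add)

lemma drl_add_left: "drl_less \<beta> \<alpha> \<Longrightarrow> drl_less (\<gamma> + \<beta>) (\<gamma> + \<alpha>)"
  using drl_add[of \<beta> \<alpha> \<gamma>] by (simp add: add.commute)

lemma drl_tdeg: "drl_less \<beta> \<alpha> \<Longrightarrow> tdeg \<beta> \<le> tdeg \<alpha>"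
  unfolding drl_less_revlex by auto

definition is_drl_max :: "(nat \<Rightarrow>\<^sub>0 nat) set \<Rightarrow> (nat \<Rightarrow>\<^sub>0 nat) \<Rightarrow> bool" where
  "is_drl_max A \<alpha> \<longleftrightarrow> \<alpha> \<in> A \<and> (\<forall>\<beta>\<in>A. \<beta> \<noteq> \<alpha> \<longrightarrow> drl_less \<beta> \<alpha>)"

lemma drl_max_exists: "finite A \<Longrightarrow> A \<noteq> {} \<Longrightarrow> \<exists>\<alpha>. is_drl_max A \<alpha>"
proof (induction A rule: finite_ne_induct)
  case (singleton x) then show ?case unfolding is_drl_max_def by auto
next
  case (insert x F)
  then obtain \<alpha> where a: "is_drl_max F \<alpha>" by blast
  show ?case
  proof (cases "drl_less x \<alpha>")
    case True then show ?thesis using a unfolding is_drl_max_def by auto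
  next
    case False
    have "x \<noteq> \<alpha>" using a insert.hyps unfolding is_drl_max_def by auto
    then have xa: "drl_less \<alpha> x" using drl_total False by blast
    have "is_drl_max (insert x F) x" unfolding is_drl_max_def
    proof (intro conjI ballI impI)
      show "x \<in> insert x F" by simp
      fix \<beta> assume b: "\<beta> \<in> insert x F" "\<beta> \<noteq> x"
      then have bF: "\<beta> \<in> F" by simp
      show "drl_less \<beta> x"
      proof (cases "\<beta> = \<alpha>")
        case True then show ?thesis using xa by simp
      next
        case False
        then have "drl_less \<beta> \<alpha>" using a bF unfolding is_drl_max_def by blast
        then show ?thesis using xa by (rule drl_trans)
      qed
    qed
    then show ?thesis by blast
  qed
qed

lemma drl_max_unique: "is_drl_max A \<alpha> \<Longrightarrow> is_drl_max A \<beta> \<Longrightarrow> \<alpha> = \<beta>"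
proof (rule ccontr)
  assume a: "is_drl_max A \<alpha>" and b: "is_drl_max A \<beta>" and ne: "\<alpha> \<noteq> \<beta>"
  have aa: "\<alpha> \<in> A" "\<forall>\<gamma>\<in>A. \<gamma> \<noteq> \<alpha> \<longrightarrow> drl_less \<gamma> \<alpha>" using a unfolding is_drl_max_def by simp_all
  have bb: "\<beta> \<in> A" "\<forall>\<gamma>\<in>A. \<gamma> \<noteq> \<beta> \<longrightarrow> drl_less \<gamma> \<beta>" using b unfolding is_drl_max_def by simp_all
  have "drl_less \<beta> \<alpha>" using aa(2) bb(1) ne by simp
  moreover have "drl_less \<alpha> \<beta>" using bb(2) aa(1) ne by simp
  ultimately show False using drl_asym by blast
qed

lemma lm_is_drl_max: "f \<noteq> 0 \<Longrightarrow> is_drl_max (keys f) (lm f)"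
proof -
  assume "f \<noteq> 0"
  then obtain \<alpha> where a: "is_drl_max (keys f) \<alpha>" using drl_max_exists[of "keys f"] by auto
  have "lm f = \<alpha>" unfolding lm_def
  proof (rule the_equality)
    show "\<alpha> \<in> keys f \<and> (\<forall>\<beta>\<in>keys f. \<beta> \<noteq> \<alpha> \<longrightarrow> drl_less \<beta> \<alpha>)" using a unfolding is_drl_max_def .
    fix \<alpha>' assume "\<alpha>' \<in> keys f \<and> (\<forall>\<beta>\<in>keys f. \<beta> \<noteq> \<alpha>' \<longrightarrow> drl_less \<beta> \<alpha>')"
    then have "is_drl_max (keys f) \<alpha>'" unfolding is_drl_max_def .
    then show "\<alpha>' = \<alpha>" using a by (rule drl_max_unique)
  qed
  then show ?thesis using a by simp
qed

lemma lm_in_keys: "f \<noteq> 0 \<Longrightarrow> lm f \<in> keys f"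
  using lm_is_drl_max unfolding is_drl_max_def by blast

lemma lm_greater: "f \<noteq> 0 \<Longrightarrow> \<beta> \<in> keys f \<Longrightarrow> \<beta> \<noteq> lm f \<Longrightarrow> drl_less \<beta> (lm f)"
  using lm_is_drl_max unfolding is_drl_max_def by blast

lemma lm_eqI: "\<alpha> \<in> keys f \<Longrightarrow> (\<And>\<beta>. \<beta> \<in> keys f \<Longrightarrow> \<beta> \<noteq> \<alpha> \<Longrightarrow> drl_less \<beta> \<alpha>) \<Longrightarrow> lm f = \<alpha>"
proof -
  assume "\<alpha> \<in> keys f" "\<And>\<beta>. \<beta> \<in> keys f \<Longrightarrow> \<beta> \<noteq> \<alpha> \<Longrightarrow> drl_less \<beta> \<alpha>"
  then have a: "is_drl_max (keys f) \<alpha>" unfolding is_drl_max_def by blast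
  then have "f \<noteq> 0" unfolding is_drl_max_def by auto
  then show "lm f = \<alpha>" using lm_is_drl_max a drl_max_unique by blast
qed

lemma tdeg_le_tdeg_lm: "\<beta> \<in> keys f \<Longrightarrow> tdeg \<beta> \<le> tdeg (lm f)"
proof -
  assume b: "\<beta> \<in> keys f"
  then have "f \<noteq> 0" by auto
  show ?thesis
  proof (cases "\<beta> = lm f")
    case False
    then have "drl_less \<beta> (lm f)" using lm_greater[of f \<beta>] b \<open>f \<noteq> 0\<close> by simp
    then show ?thesis by (rule drl_tdeg)
  qed simp
qed

lemma lm_single: "c \<noteq> 0 \<Longrightarrow> lm (single \<alpha> c) = \<alpha>"
  by (rule lm_eqI) auto

definition drl_rel :: "nat \<Rightarrow> ((nat \<Rightarrow>\<^sub>0 nat) \<times> (nat \<Rightarrow>\<^sub>0 nat)) set" where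
  "drl_rel n = {p. drl_less (fst p) (snd p) \<and> keys (fst p) \<subseteq> {..<n} \<and> keys (snd p) \<subseteq> {..<n}}"

lemma drl_rel_iff: "(\<beta>, \<alpha>) \<in> drl_rel n \<longleftrightarrow> drl_less \<beta> \<alpha> \<and> keys \<beta> \<subseteq> {..<n} \<and> keys \<alpha> \<subseteq> {..<n}"
  unfolding drl_rel_def by simp

lemma finite_bounded_monomials: "finite {\<beta>. keys \<beta> \<subseteq> {..<n} \<and> tdeg \<beta> \<le> D}"
proof -
  define M where "M = {\<beta>. keys \<beta> \<subseteq> {..<n} \<and> tdeg \<beta> \<le> D}"
  define L where "L = {xs. set xs \<subseteq> {..D} \<and> length xs = n}"
  define f where "f \<beta> = map (lookup \<beta>) [0..<n]" for \<beta> :: "nat \<Rightarrow>\<^sub>0 nat"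
  have inj: "inj_on f M"
  proof (rule inj_onI)
    fix \<alpha> \<beta> assume a1: "\<alpha> \<in> M" and a2: "\<beta> \<in> M" and a3: "f \<alpha> = f \<beta>"
    show "\<alpha> = \<beta>"
    proof (rule poly_mapping_eqI)
      fix i show "lookup \<alpha> i = lookup \<beta> i"
      proof (cases "i < n")
        case True
        have "f \<alpha> ! i = f \<beta> ! i" using a3 by simp
        then show ?thesis using True unfolding f_def by simp
      next
        case False
        then have "i \<notin> keys \<alpha>" using a1 unfolding M_def by auto
        moreover have "i \<notin> keys \<beta>" using a2 False unfolding M_def by auto
        ultimately show ?thesis by (simp add: in_keys_iff)
      qed
    qed
  qed
  have sub: "f ` M \<subseteq> L"
  proof
    fix xs assume "xs \<in> f ` M"
    then obtain \<beta> where b1: "\<beta> \<in> M" and b2: "xs = f \<beta>" by blast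
    have "lookup \<beta> i \<le> D" for i using b1 lookup_le_tdeg[of \<beta> i] unfolding M_def by simp
    then show "xs \<in> L" unfolding b2 L_def f_def by auto
  qed
  have "finite L" unfolding L_def by (rule finite_lists_length_eq) simp
  then have "finite (f ` M)" using sub by (rule finite_subset[rotated])
  then have "finite M" using inj by (rule finite_imageD)
  then show ?thesis unfolding M_def .
qed

lemma wf_drl_rel: "wf (drl_rel n)"
proof -
  define P where "P \<alpha> = {\<beta>. (\<beta>, \<alpha>) \<in> drl_rel n}" for \<alpha>
  have fin: "finite (P \<alpha>)" for \<alpha>
  proof (rule finite_subset)
    show "finite {\<beta>. keys \<beta> \<subseteq> {..<n} \<and> tdeg \<beta> \<le> tdeg \<alpha>}" by (rule finite_bounded_monomials)
    show "P \<alpha> \<subseteq> {\<beta>. keys \<beta> \<subseteq> {..<n} \<and> tdeg \<beta> \<le> tdeg \<alpha>}"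
    proof
      fix \<beta> assume "\<beta> \<in> P \<alpha>"
      then have "drl_less \<beta> \<alpha>" "keys \<beta> \<subseteq> {..<n}" unfolding P_def drl_rel_iff by simp_all
      then show "\<beta> \<in> {\<beta>. keys \<beta> \<subseteq> {..<n} \<and> tdeg \<beta> \<le> tdeg \<alpha>}" using drl_tdeg by simp
    qed
  qed
  have "drl_rel n \<subseteq> measure (\<lambda>\<alpha>. card (P \<alpha>))"
  proof
    fix x assume x: "x \<in> drl_rel n"
    obtain \<beta> \<alpha> where xe: "x = (\<beta>, \<alpha>)" by (cases x)
    have ba: "drl_less \<beta> \<alpha>" "keys \<beta> \<subseteq> {..<n}" "keys \<alpha> \<subseteq> {..<n}" using x unfolding xe drl_rel_iff by simp_all
    have sub: "P \<beta> \<subseteq> P \<alpha>"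
    proof
      fix \<gamma> assume "\<gamma> \<in> P \<beta>"
      then have "drl_less \<gamma> \<beta>" "keys \<gamma> \<subseteq> {..<n}" unfolding P_def drl_rel_iff by simp_all
      then show "\<gamma> \<in> P \<alpha>" using ba drl_trans[of \<gamma> \<beta> \<alpha>] unfolding P_def drl_rel_iff by simp
    qed
    have "\<beta> \<in> P \<alpha>" using ba unfolding P_def drl_rel_iff by simp
    moreover have "\<beta> \<notin> P \<beta>" using drl_irrefl[of \<beta>] unfolding P_def drl_rel_iff by simp
    ultimately have "P \<beta> \<subset> P \<alpha>" using sub by blast
    then have "card (P \<beta>) < card (P \<alpha>)" using fin[of \<alpha>] by (simp add: psubset_card_mono)
    then show "x \<in> measure (\<lambda>\<alpha>. card (P \<alpha>))" using xe by simp
  qed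
  then show ?thesis by (rule wf_subset[OF wf_measure])
qed

lemma drl_less_lm_reduction:
  fixes f g :: "'k::field mpoly"
  defines "r \<equiv> f - single (lm f - lm g) (lookup f (lm f)) * g"
  assumes f0: "f \<noteq> 0" and g0: "g \<noteq> 0" and lc: "lc g = 1" and dv: "mdvd (lm g) (lm f)"
    and r0: "r \<noteq> 0"
  shows "drl_less (lm r) (lm f)"
proof -
  define \<gamma> where "\<gamma> = lm f - lm g"
  have \<mu>: "\<gamma> + lm g = lm f" unfolding \<gamma>_def by (rule mdvd_diff_add[OF dv])
  let ?q = "single \<gamma> (lookup f (lm f)) * g"
  have "lookup ?q (lm f) = lookup f (lm f)"
    using lookup_single_mult[of \<gamma> "lookup f (lm f)" g "lm g"] lc \<mu> unfolding lc_def by simp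
  then have "lookup r (lm f) = 0" unfolding r_def \<gamma>_def by (simp add: lookup_minus)
  then have ne: "lm r \<noteq> lm f" using lm_in_keys[OF r0] by (auto simp: in_keys_iff)
  have "lm r \<in> keys f \<union> keys ?q" using lm_in_keys[OF r0] keys_diff[of f ?q] unfolding r_def \<gamma>_def by blast
  then show ?thesis
  proof
    assume "lm r \<in> keys f"
    then show ?thesis using lm_greater[OF f0] ne by simp
  next
    assume "lm r \<in> keys ?q"
    then obtain \<beta> where \<beta>: "\<beta> \<in> keys g" "lm r = \<gamma> + \<beta>"
      using keys_single_mult_subset[of \<gamma> "lookup f (lm f)" g] by blast
    have "\<beta> \<noteq> lm g" using \<beta> ne \<mu> by auto
    then have "drl_less \<beta> (lm g)" using lm_greater[OF g0 \<beta>(1)] by simp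
    then have "drl_less (\<gamma> + \<beta>) (\<gamma> + lm g)" by (rule drl_add_left)
    then show ?thesis using \<beta> \<mu> by simp
  qed
qed

lemma groebner_basis_generates:
  assumes I: "is_ideal n I" and IS: "\<And>p. p \<in> I \<Longrightarrow> in_S n p"
    and gb: "is_groebner_basis I G" and lc1: "\<And>g. g \<in> G \<Longrightarrow> lc g = 1"
  shows "ideal_gen n G = I"
proof
  have GI: "G \<subseteq> I" and G0: "0 \<notin> G"
    and GB: "\<And>f. f \<in> I \<Longrightarrow> f \<noteq> 0 \<Longrightarrow> \<exists>g\<in>G. mdvd (lm g) (lm f)"
    using gb unfolding is_groebner_basis_def by blast+
  show "ideal_gen n G \<subseteq> I" using ideal_gen_least[OF I GI] .
  have main: "f \<in> I \<Longrightarrow> f \<noteq> 0 \<Longrightarrow> lm f = \<mu> \<Longrightarrow> f \<in> ideal_gen n G" for f \<mu>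
  proof (induction \<mu> arbitrary: f rule: wf_induct[OF wf_drl_rel[of n]])
    case (1 \<mu>)
    then have fI: "f \<in> I" and f0: "f \<noteq> 0" and lmf: "lm f = \<mu>" by simp_all
    obtain g where gG: "g \<in> G" and dv: "mdvd (lm g) (lm f)" using GB[OF fI f0] by blast
    define q where "q = single (lm f - lm g) (lookup f (lm f)) * g"
    have \<mu>S: "keys \<mu> \<subseteq> {..<n}" using in_S_keys[OF IS[OF fI] lm_in_keys[OF f0]] lmf by simp
    then have "keys (lm f - lm g) \<subseteq> {..<n}" using keys_diff_subset[of "lm f" "lm g"] lmf by blast
    then have qG: "q \<in> ideal_gen n G"
      unfolding q_def by (rule ideal_gen_mult[OF ideal_gen_mem[OF gG] in_S_single])
    have rI: "f - q \<in> I" using ideal_diff[OF I fI] ideal_gen_least[OF I GI] qG by blast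
    have "f - q \<in> ideal_gen n G"
    proof (cases "f - q = 0")
      case False
      have "g \<noteq> 0" using gG G0 by blast
      then have "drl_less (lm (f - q)) \<mu>"
        using drl_less_lm_reduction[OF f0 _ lc1[OF gG] dv] False lmf unfolding q_def by simp
      moreover have "keys (lm (f - q)) \<subseteq> {..<n}" using in_S_keys[OF IS[OF rI] lm_in_keys[OF False]] .
      ultimately have "(lm (f - q), \<mu>) \<in> drl_rel n" using \<mu>S by (simp add: drl_rel_iff)
      then show ?thesis using "1.IH" rI False by blast
    qed (simp add: ideal_gen_zero)
    then show "f \<in> ideal_gen n G" using ideal_gen_add[OF _ qG] by fastforce
  qed
  show "I \<subseteq> ideal_gen n G"
  proof
    fix f assume "f \<in> I"
    then show "f \<in> ideal_gen n G" using main[of f "lm f"] ideal_gen_zero by (cases "f = 0") simp_all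
  qed
qed

section \<open>The tangent cone\<close>

lemma coeff_sg_eval: "coeff (sg_eval a p) k = coeff_sum {\<alpha>. wdeg a \<alpha> = k} p"
proof -
  have "coeff (sg_eval a p) k = (\<Sum>\<alpha>\<in>keys p. (if wdeg a \<alpha> = k then lookup p \<alpha> else 0))"
    unfolding sg_eval_def wdeg_def by (simp add: coeff_sum coeff_monom)
  also have "\<dots> = (\<Sum>\<alpha>\<in>keys p \<inter> {\<alpha>. wdeg a \<alpha> = k}. lookup p \<alpha>)"
    by (simp add: sum.inter_restrict)
  finally show ?thesis unfolding coeff_sum_def .
qed

lemma sg_eval_zero_iff: "sg_eval a p = 0 \<longleftrightarrow> (\<forall>k. coeff_sum {\<alpha>. wdeg a \<alpha> = k} p = 0)"
  by (metis coeff_sg_eval coeff_0 poly_eqI)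

lemma lookup_initial_form:
  "lookup (initial_form f) \<beta> = (if tdeg \<beta> = Min (tdeg ` keys f) then lookup f \<beta> else 0)"
proof -
  define m where "m = Min (tdeg ` keys f)"
  define A where "A = {\<alpha>\<in>keys f. tdeg \<alpha> = m}"
  have "initial_form f = (\<Sum>\<alpha>\<in>A. single \<alpha> (lookup f \<alpha>))"
    unfolding initial_form_def Let_def m_def A_def ..
  then have "lookup (initial_form f) \<beta> = (\<Sum>\<alpha>\<in>A. (if \<beta> = \<alpha> then lookup f \<alpha> else 0))"
    by (simp add: lookup_sum lookup_single when_def eq_commute)
  also have "\<dots> = (if \<beta> \<in> A then lookup f \<beta> else 0)"
    by (simp add: sum.delta A_def)
  also have "\<dots> = (if tdeg \<beta> = m then lookup f \<beta> else 0)"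
    unfolding A_def by (auto simp: in_keys_iff)
  finally show ?thesis unfolding m_def .
qed

lemma keys_initial_form_subset: "keys (initial_form f) \<subseteq> keys f"
  by (auto simp: in_keys_iff lookup_initial_form split: if_splits)

lemma keys_initial_form_tdeg: "\<beta> \<in> keys (initial_form f) \<Longrightarrow> tdeg \<beta> = Min (tdeg ` keys f)"
  by (auto simp: in_keys_iff lookup_initial_form split: if_splits)

abbreviation tcone :: "nat \<Rightarrow> (nat \<Rightarrow> nat) \<Rightarrow> 'k::field mpoly set" where
  "tcone n a \<equiv> tangent_cone_ideal n (toric_ideal n a)"

abbreviation tcone_gens :: "nat \<Rightarrow> (nat \<Rightarrow> nat) \<Rightarrow> 'k::field mpoly set" where
  "tcone_gens n a \<equiv> {initial_form f | f. f \<in> toric_ideal n a \<and> f \<noteq> 0}"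

lemma tcone_is_ideal: "is_ideal n (tcone n a)"
  unfolding tangent_cone_ideal_def by (rule ideal_gen_is_ideal)

lemma tcone_gens_in_S: "x \<in> tcone_gens n a \<Longrightarrow> in_S n x"
  unfolding toric_ideal_def in_S_def using keys_initial_form_subset by blast

lemma tcone_in_S: "p \<in> tcone n a \<Longrightarrow> in_S n p"
  unfolding tangent_cone_ideal_def by (rule ideal_gen_in_S[OF tcone_gens_in_S])

lemma tcone_gens_mem: "x \<in> tcone_gens n a \<Longrightarrow> x \<in> tcone n a"
  unfolding tangent_cone_ideal_def by (rule ideal_gen_mem)

definition fibre :: "nat \<Rightarrow> (nat \<Rightarrow> nat) \<Rightarrow> nat \<Rightarrow> nat \<Rightarrow> (nat \<Rightarrow>\<^sub>0 nat) set" where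
  "fibre n a D h = {\<alpha>. keys \<alpha> \<subseteq> {..<n} \<and> tdeg \<alpha> = D \<and> wdeg a \<alpha> = h}"

definition deg_bound :: "nat \<Rightarrow> (nat \<Rightarrow> nat) \<Rightarrow> nat \<Rightarrow> nat \<Rightarrow> bool" where
  "deg_bound n a D h \<longleftrightarrow> (\<forall>\<beta>. keys \<beta> \<subseteq> {..<n} \<longrightarrow> wdeg a \<beta> = h \<longrightarrow> tdeg \<beta> \<le> D)"

lemma fibre_shift:
  assumes "keys \<gamma> \<subseteq> {..<n}" "\<gamma> + \<delta>' \<in> fibre n a D h"
  shows "{\<delta>. \<gamma> + \<delta> \<in> fibre n a D h} = fibre n a (tdeg \<delta>') (wdeg a \<delta>')"
  using assms unfolding fibre_def by (auto simp: keys_add_nat tdeg_add wdeg_add)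

lemma keys_initial_form_shifted_fibre:
  assumes deg: "deg_bound n a D h" and fS: "in_S n f" and \<gamma>S: "keys \<gamma> \<subseteq> {..<n}"
    and \<delta>': "\<delta>' \<in> keys (initial_form f)" "\<gamma> + \<delta>' \<in> fibre n a D h"
  shows "keys (initial_form f) \<inter> {\<delta>. \<gamma> + \<delta> \<in> fibre n a D h} = keys f \<inter> {\<delta>. wdeg a \<delta> = wdeg a \<delta>'}"
proof
  define m where "m = Min (tdeg ` keys f)"
  have "tdeg \<delta>' = m" using keys_initial_form_tdeg \<delta>'(1) unfolding m_def by blast
  then have D: "D = tdeg \<gamma> + m" and h: "h = wdeg a \<gamma> + wdeg a \<delta>'"
    using \<delta>'(2) unfolding fibre_def by (auto simp: tdeg_add wdeg_add)
  show "keys (initial_form f) \<inter> {\<delta>. \<gamma> + \<delta> \<in> fibre n a D h} \<subseteq> keys f \<inter> {\<delta>. wdeg a \<delta> = wdeg a \<delta>'}"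
    using keys_initial_form_subset[of f] h unfolding fibre_def by (auto simp: wdeg_add)
  show "keys f \<inter> {\<delta>. wdeg a \<delta> = wdeg a \<delta>'} \<subseteq> keys (initial_form f) \<inter> {\<delta>. \<gamma> + \<delta> \<in> fibre n a D h}"
  proof
    fix \<delta> assume \<delta>: "\<delta> \<in> keys f \<inter> {\<delta>. wdeg a \<delta> = wdeg a \<delta>'}"
    have S: "keys (\<gamma> + \<delta>) \<subseteq> {..<n}" using \<delta> fS \<gamma>S in_S_keys[of n f \<delta>] by (simp add: keys_add_nat)
    have w: "wdeg a (\<gamma> + \<delta>) = h" using \<delta> h by (simp add: wdeg_add)
    then have "tdeg (\<gamma> + \<delta>) \<le> D" using deg S unfolding deg_bound_def by blast
    then have "tdeg \<gamma> + tdeg \<delta> \<le> D" by (simp add: tdeg_add)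
    moreover have "m \<le> tdeg \<delta>" unfolding m_def using \<delta> by (intro Min_le) auto
    ultimately have "tdeg \<delta> = m" using D by simp
    then have "\<delta> \<in> keys (initial_form f)" using \<delta> by (simp add: in_keys_iff lookup_initial_form m_def)
    moreover have "\<gamma> + \<delta> \<in> fibre n a D h"
      unfolding fibre_def using S w \<open>tdeg \<delta> = m\<close> D by (simp add: tdeg_add)
    ultimately show "\<delta> \<in> keys (initial_form f) \<inter> {\<delta>. \<gamma> + \<delta> \<in> fibre n a D h}" by simp
  qed
qed

text \<open>The shifted fibre picks out of \<open>f\<^sup>*\<close> exactly the terms of \<open>f\<close> of one weight; these
  have the least degree of \<open>f\<close>, so their coefficients sum to a coefficient of \<open>sg_eval a f = 0\<close>.\<close>

lemma coeff_sum_shifted_fibre_tcone_gens: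
  assumes deg: "deg_bound n a D h" and x: "x \<in> tcone_gens n a" and \<gamma>S: "keys \<gamma> \<subseteq> {..<n}"
  shows "coeff_sum {\<delta>. \<gamma> + \<delta> \<in> fibre n a D h} (x :: 'k::field mpoly) = 0"
proof (cases "keys x \<inter> {\<delta>. \<gamma> + \<delta> \<in> fibre n a D h} = {}")
  case True then show ?thesis by (rule coeff_sum_empty)
next
  case False
  obtain f where xf: "x = initial_form f" and fS: "in_S n f" and f0: "sg_eval a f = 0"
    using x unfolding toric_ideal_def by blast
  obtain \<delta>' where \<delta>': "\<delta>' \<in> keys x" "\<gamma> + \<delta>' \<in> fibre n a D h" using False by blast
  let ?K = "keys f \<inter> {\<delta>. wdeg a \<delta> = wdeg a \<delta>'}"
  have K: "keys x \<inter> {\<delta>. \<gamma> + \<delta> \<in> fibre n a D h} = ?K"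
    using keys_initial_form_shifted_fibre[OF deg fS \<gamma>S] \<delta>' unfolding xf by blast
  have "coeff_sum {\<delta>. \<gamma> + \<delta> \<in> fibre n a D h} x = (\<Sum>\<delta>\<in>?K. lookup x \<delta>)"
    unfolding coeff_sum_def K ..
  also have "\<dots> = (\<Sum>\<delta>\<in>?K. lookup f \<delta>)"
  proof (rule sum.cong)
    fix \<delta> assume "\<delta> \<in> ?K"
    then have "\<delta> \<in> keys (initial_form f)" using K unfolding xf by blast
    then have "tdeg \<delta> = Min (tdeg ` keys f)" by (rule keys_initial_form_tdeg)
    then show "lookup x \<delta> = lookup f \<delta>" unfolding xf by (simp add: lookup_initial_form)
  qed simp
  also have "\<dots> = coeff (sg_eval a f) (wdeg a \<delta>')" unfolding coeff_sg_eval coeff_sum_def ..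
  finally show ?thesis using f0 by simp
qed

lemma coeff_sum_fibre_tcone:
  assumes "deg_bound n a D h" "p \<in> tcone n a"
  shows "coeff_sum (fibre n a D h) (p :: 'k::field mpoly) = 0"
  using assms(2) unfolding tangent_cone_ideal_def
  by (rule ideal_gen_coeff_sum_zero[rotated]) (use coeff_sum_shifted_fibre_tcone_gens[OF assms(1)] in blast)

lemma lookup_tcone_eq_0_if_weight_unique:
  assumes S: "keys \<alpha> \<subseteq> {..<n}" and p: "(p :: 'k::field mpoly) \<in> tcone n a"
    and unique: "\<And>\<beta>. keys \<beta> \<subseteq> {..<n} \<Longrightarrow> wdeg a \<beta> = wdeg a \<alpha> \<Longrightarrow> \<beta> = \<alpha>"
  shows "lookup p \<alpha> = 0"
proof -
  have "deg_bound n a (tdeg \<alpha>) (wdeg a \<alpha>)" using unique unfolding deg_bound_def by auto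
  moreover have "fibre n a (tdeg \<alpha>) (wdeg a \<alpha>) = {\<alpha>}" using unique S unfolding fibre_def by auto
  ultimately show ?thesis using coeff_sum_fibre_tcone[OF _ p] by (metis coeff_sum_singleton)
qed

lemma toric_binomial:
  assumes Sa: "keys \<alpha> \<subseteq> {..<n}" and Sb: "keys \<beta> \<subseteq> {..<n}" and ne: "\<alpha> \<noteq> \<beta>"
    and eq: "wdeg a \<alpha> = wdeg a \<beta>"
  shows "(single \<alpha> 1 - single \<beta> 1 :: 'k::field mpoly) \<in> toric_ideal n a"
    and "lookup (single \<alpha> 1 - single \<beta> 1 :: 'k::field mpoly) \<gamma> = (if \<gamma> = \<alpha> then 1 else if \<gamma> = \<beta> then -1 else 0)"
    and "keys (single \<alpha> 1 - single \<beta> 1 :: 'k::field mpoly) = {\<alpha>, \<beta>}"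
    and "(single \<alpha> 1 - single \<beta> 1 :: 'k::field mpoly) \<noteq> 0"
proof -
  define f :: "'k mpoly" where "f = single \<alpha> 1 - single \<beta> 1"
  have lkf: "lookup f \<gamma> = (if \<gamma> = \<alpha> then 1 else if \<gamma> = \<beta> then -1 else 0)" for \<gamma>
    unfolding f_def using ne by (auto simp: lookup_minus lookup_single when_def)
  then show "lookup (single \<alpha> 1 - single \<beta> 1 :: 'k::field mpoly) \<gamma> = (if \<gamma> = \<alpha> then 1 else if \<gamma> = \<beta> then -1 else 0)"
    unfolding f_def .
  have ksf: "keys f = {\<alpha>, \<beta>}"
  proof
    show "keys f \<subseteq> {\<alpha>, \<beta>}"
    proof
      fix \<gamma> assume "\<gamma> \<in> keys f" then show "\<gamma> \<in> {\<alpha>, \<beta>}" using lkf[of \<gamma>] by (auto simp: in_keys_iff split: if_splits)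
    qed
    show "{\<alpha>, \<beta>} \<subseteq> keys f" using lkf[of \<alpha>] lkf[of \<beta>] ne by (auto simp: in_keys_iff)
  qed
  then show "keys (single \<alpha> 1 - single \<beta> 1 :: 'k::field mpoly) = {\<alpha>, \<beta>}" unfolding f_def .
  show "(single \<alpha> 1 - single \<beta> 1 :: 'k::field mpoly) \<noteq> 0"
  proof
    assume "(single \<alpha> 1 - single \<beta> 1 :: 'k::field mpoly) = 0"
    then have "lookup f \<alpha> = 0" unfolding f_def by simp
    then show False using lkf[of \<alpha>] by simp
  qed
  have fS: "in_S n f" unfolding in_S_def ksf using Sa Sb by auto
  have "coeff_sum {\<alpha>. wdeg a \<alpha> = k} f = 0" for k
    unfolding f_def coeff_sum_diff coeff_sum_single using eq by simp
  then have "sg_eval a f = 0" by (simp add: sg_eval_zero_iff)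
  then show "(single \<alpha> 1 - single \<beta> 1 :: 'k::field mpoly) \<in> toric_ideal n a"
    using fS unfolding toric_ideal_def f_def by simp
qed

lemma initial_form_mem_tcone: "f \<in> toric_ideal n a \<Longrightarrow> f \<noteq> 0 \<Longrightarrow> initial_form f \<in> tcone n a"
  by (rule tcone_gens_mem) blast

lemma homogeneous_binomial_in_tcone:
  assumes "keys \<alpha> \<subseteq> {..<n}" "keys \<beta> \<subseteq> {..<n}" "\<alpha> \<noteq> \<beta>" "wdeg a \<alpha> = wdeg a \<beta>"
    and deg: "tdeg \<alpha> = tdeg \<beta>"
  shows "(single \<alpha> 1 - single \<beta> 1 :: 'k::field mpoly) \<in> tcone n a"
proof -
  define f :: "'k mpoly" where "f = single \<alpha> 1 - single \<beta> 1"
  note bf = toric_binomial[OF assms(1-4), where 'k='k, folded f_def]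
  have mn: "Min (tdeg ` keys f) = tdeg \<alpha>" unfolding bf(3) using deg by simp
  have "initial_form f = f"
  proof (rule poly_mapping_eqI)
    fix \<gamma>
    show "lookup (initial_form f) \<gamma> = lookup f \<gamma>"
      unfolding lookup_initial_form mn bf(2) using deg by auto
  qed
  then show ?thesis using initial_form_mem_tcone[OF bf(1,4)] unfolding f_def by simp
qed

lemma monomial_in_tcone_if_binomial:
  assumes "keys \<alpha> \<subseteq> {..<n}" "keys \<beta> \<subseteq> {..<n}" "wdeg a \<alpha> = wdeg a \<beta>"
    and deg: "tdeg \<alpha> < tdeg \<beta>"
  shows "(single \<alpha> 1 :: 'k::field mpoly) \<in> tcone n a"
proof -
  have ne: "\<alpha> \<noteq> \<beta>" using deg by auto
  define f :: "'k mpoly" where "f = single \<alpha> 1 - single \<beta> 1"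
  note bf = toric_binomial[OF assms(1,2) ne assms(3), where 'k='k, folded f_def]
  have mn: "Min (tdeg ` keys f) = tdeg \<alpha>" unfolding bf(3) using deg by simp
  have "initial_form f = single \<alpha> 1"
  proof (rule poly_mapping_eqI)
    fix \<gamma>
    show "lookup (initial_form f) \<gamma> = lookup (single \<alpha> 1) \<gamma>"
      unfolding lookup_initial_form mn bf(2) using deg by (auto simp: lookup_single when_def)
  qed
  then show ?thesis using initial_form_mem_tcone[OF bf(1,4)] by simp
qed

section \<open>Arithmetic sequences\<close>

lemma coprime_exchange_le:
  fixes A d D D' w w' :: nat
  assumes cop: "coprime A d" and A: "A > 0" and eq: "A * D + d * w = A * D' + d * w'" and DD: "D < D'"
  shows "A \<le> w"
proof -
  define k where "k = D' - D"
  have k0: "k > 0" and D': "D' = D + k" using DD unfolding k_def by auto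
  have e: "d * w = A * k + d * w'" using eq unfolding D' by (simp add: algebra_simps)
  have Ak: "A * k > 0" using A k0 by simp
  have d0: "d > 0" using e Ak by (cases "d = 0") auto
  have "d * w' < d * w" using e Ak by linarith
  then have ww: "w' < w" by simp
  have e2: "d * (w - w') = A * k" using e ww by (simp add: diff_mult_distrib2)
  then have "d dvd A * k" by (metis dvd_triv_left)
  then have "d dvd k" using cop by (simp add: coprime_commute coprime_dvd_mult_right_iff)
  then have "d \<le> k" using k0 by (simp add: dvd_imp_le)
  then have "A * d \<le> A * k" by simp
  then have "d * A \<le> d * (w - w')" using e2 by (simp add: mult.commute)
  then have "A \<le> w - w'" using d0 by simp
  then show ?thesis by simp
qed

lemma zero_in_sg_generated: "0 \<in> sg_generated X"
  unfolding sg_generated_def by (rule CollectI, rule exI[of _ "\<lambda>_. 0"]) simp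

lemma sum_lessThan_Suc_split:
  assumes "1 \<le> m"
  shows "(\<Sum>k<Suc m. f k) = f 0 + (\<Sum>k\<in>{1..<m}. f k) + (f m :: nat)"
proof -
  have "{..<m} = insert 0 {1..<m}" using assms by auto
  then have "(\<Sum>k<m. f k) = f 0 + (\<Sum>k\<in>{1..<m}. f k)" by simp
  then show ?thesis by simp
qed

locale arith_semigroup =
  fixes n d :: nat and a :: "nat \<Rightarrow> nat"
  assumes incr: "\<And>i. Suc i < n \<Longrightarrow> a i < a (Suc i)"
    and arith: "\<And>i. Suc i < n \<Longrightarrow> a (Suc i) = a i + d"
    and numsg: "finite (UNIV - sg_generated (a ` {..<n}))"
    and mingen: "\<And>i. i < n \<Longrightarrow> a i \<notin> sg_generated (a ` {..<n} - {a i})"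
begin

abbreviation index_deg :: "(nat \<Rightarrow>\<^sub>0 nat) \<Rightarrow> nat" where "index_deg \<equiv> wdeg (\<lambda>i. i)"

abbreviation e :: "nat \<Rightarrow> (nat \<Rightarrow>\<^sub>0 nat)" where "e i \<equiv> single i 1"

abbreviation m :: nat where "m \<equiv> n - 1"

lemma n_pos: "0 < n"
proof (rule ccontr)
  assume "\<not> 0 < n"
  then have "n = 0" by simp
  then have "sg_generated (a ` {..<n}) = {0}" unfolding sg_generated_def by auto
  then have "finite (UNIV - {0::nat})" using numsg by simp
  then show False by simp
qed

lemma a_pos: "i < n \<Longrightarrow> 0 < a i"
  using mingen[of i] zero_in_sg_generated by (cases "a i = 0") auto

lemma a_lin: "i < n \<Longrightarrow> a i = a 0 + i * d"
proof (induction i)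
  case (Suc i)
  then show ?case using arith[of i] by simp
qed simp

lemma a_mono: "i < j \<Longrightarrow> j < n \<Longrightarrow> a i < a j"
proof (induction j)
  case (Suc j)
  then show ?case using incr[of j] by (cases "i = j") auto
qed simp

lemma a_inj: "inj_on a {..<n}"
proof (rule inj_onI)
  fix i j assume "i \<in> {..<n}" "j \<in> {..<n}" "a i = a j"
  then show "i = j" using a_mono[of i j] a_mono[of j i] by (cases i j rule: linorder_cases) auto
qed

lemma d_pos: "1 < n \<Longrightarrow> 0 < d"
  using incr[of 0] arith[of 0] by simp

lemma coprime_a0_d: "coprime (a 0) d"
proof -
  define g where "g = gcd (a 0) d"
  have gi: "g dvd a i" if "i < n" for i
    using a_lin[OF that] unfolding g_def by simp
  have gsg: "g dvd x" if "x \<in> sg_generated (a ` {..<n})" for x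
  proof -
    have "\<exists>c. x = (\<Sum>b\<in>a ` {..<n}. c b * b)" using that by (simp add: sg_generated_def)
    then obtain c where x: "x = (\<Sum>b\<in>a ` {..<n}. c b * b)" by blast
    show ?thesis unfolding x by (rule dvd_sum) (use gi in auto)
  qed
  obtain N where N: "\<forall>x\<in>UNIV - sg_generated (a ` {..<n}). x < N"
    using numsg finite_nat_set_iff_bounded by blast
  have "g \<noteq> 0" using a_pos[OF n_pos] unfolding g_def by auto
  then have "N \<le> N * g + 1" by (simp add: le_SucI)
  then have "N * g + 1 \<in> sg_generated (a ` {..<n})" using N by (metis DiffI UNIV_I leD)
  then have "g dvd N * g + 1" by (rule gsg)
  then have "g dvd 1" by (metis dvd_add_right_iff dvd_triv_right)
  then show ?thesis unfolding g_def by (simp add: coprime_iff_gcd_eq_1)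
qed

lemma tdeg_sum: "keys \<alpha> \<subseteq> {..<n} \<Longrightarrow> tdeg \<alpha> = (\<Sum>i<n. lookup \<alpha> i)"
  unfolding tdeg_def by (rule sum.mono_neutral_left) (auto simp: in_keys_iff)

lemma index_deg_sum: "keys \<alpha> \<subseteq> {..<n} \<Longrightarrow> index_deg \<alpha> = (\<Sum>i<n. lookup \<alpha> i * i)"
  by (simp add: wdeg_superset)

lemma wdeg_eq_index_deg: "keys \<alpha> \<subseteq> {..<n} \<Longrightarrow> wdeg a \<alpha> = a 0 * tdeg \<alpha> + d * index_deg \<alpha>"
proof -
  assume S: "keys \<alpha> \<subseteq> {..<n}"
  have "wdeg a \<alpha> = (\<Sum>i<n. lookup \<alpha> i * a i)" using S by (simp add: wdeg_superset)
  also have "\<dots> = (\<Sum>i<n. a 0 * lookup \<alpha> i + d * (lookup \<alpha> i * i))"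
  proof (rule sum.cong)
    fix i assume "i \<in> {..<n}"
    then have "a i = a 0 + i * d" by (intro a_lin) simp
    then show "lookup \<alpha> i * a i = a 0 * lookup \<alpha> i + d * (lookup \<alpha> i * i)" by (simp add: algebra_simps)
  qed simp
  also have "\<dots> = a 0 * tdeg \<alpha> + d * index_deg \<alpha>"
    using S by (simp add: sum.distrib sum_distrib_left tdeg_sum index_deg_sum)
  finally show ?thesis .
qed

lemma index_deg_le: "keys \<alpha> \<subseteq> {..<n} \<Longrightarrow> index_deg \<alpha> \<le> (n - 1) * tdeg \<alpha>"
proof -
  assume S: "keys \<alpha> \<subseteq> {..<n}"
  have "index_deg \<alpha> = (\<Sum>i<n. lookup \<alpha> i * i)" using S by (rule index_deg_sum)
  also have "\<dots> \<le> (\<Sum>i<n. lookup \<alpha> i * (n - 1))"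
  proof (rule sum_mono)
    fix i assume "i \<in> {..<n}"
    then have "i \<le> n - 1" by simp
    then show "lookup \<alpha> i * i \<le> lookup \<alpha> i * (n - 1)" by (rule mult_le_mono2)
  qed
  also have "\<dots> = (n - 1) * tdeg \<alpha>" using S by (simp add: tdeg_sum sum_distrib_left mult.commute)
  finally show ?thesis .
qed

lemma tdeg_le_wdeg: "keys \<alpha> \<subseteq> {..<n} \<Longrightarrow> tdeg \<alpha> \<le> wdeg a \<alpha>"
proof -
  assume S: "keys \<alpha> \<subseteq> {..<n}"
  have "tdeg \<alpha> = (\<Sum>i<n. lookup \<alpha> i * 1)" using S by (simp add: tdeg_sum)
  also have "\<dots> \<le> (\<Sum>i<n. lookup \<alpha> i * a i)"
    by (rule sum_mono) (use a_pos in \<open>auto simp: Suc_le_eq\<close>)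
  also have "\<dots> = wdeg a \<alpha>" using wdeg_superset[of "{..<n}" \<alpha> a] S by simp
  finally show ?thesis .
qed

lemma deg_bound_of_index_deg:
  assumes S: "keys \<beta> \<subseteq> {..<n}" and small: "index_deg \<beta> < a 0"
  shows "deg_bound n a (tdeg \<beta>) (wdeg a \<beta>)"
  unfolding deg_bound_def
proof (intro allI impI)
  fix \<beta>' assume S': "keys \<beta>' \<subseteq> {..<n}" and eq: "wdeg a \<beta>' = wdeg a \<beta>"
  show "tdeg \<beta>' \<le> tdeg \<beta>"
  proof (rule ccontr)
    assume "\<not> tdeg \<beta>' \<le> tdeg \<beta>"
    then have lt: "tdeg \<beta> < tdeg \<beta>'" by simp
    have "a 0 * tdeg \<beta> + d * index_deg \<beta> = a 0 * tdeg \<beta>' + d * index_deg \<beta>'"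
      using eq wdeg_eq_index_deg[OF S] wdeg_eq_index_deg[OF S'] by simp
    then have "a 0 \<le> index_deg \<beta>" using coprime_exchange_le[OF coprime_a0_d a_pos[OF n_pos]] lt by blast
    then show False using small by simp
  qed
qed

lemma higher_degree_same_weight:
  assumes n2: "1 < n" and S: "keys \<alpha> \<subseteq> {..<n}" and heavy: "a 0 \<le> index_deg \<alpha>"
  shows "\<exists>\<beta>'. keys \<beta>' \<subseteq> {..<n} \<and> wdeg a \<beta>' = wdeg a \<alpha> \<and> tdeg \<alpha> < tdeg \<beta>'"
proof -
  have m0: "0 < m" "m < n" using n2 by auto
  define D where "D = tdeg \<alpha>"
  define E where "E = index_deg \<alpha> - a 0"
  define q where "q = E div m"
  define r where "r = E mod m"
  have Eqr: "E = q * m + r" unfolding q_def r_def by (metis div_mult_mod_eq)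
  have rm: "r < m" using m0 unfolding r_def by simp
  have idx_le: "index_deg \<alpha> \<le> m * D" using index_deg_le[OF S] unfolding D_def by simp
  have a0: "0 < a 0" using a_pos n_pos by blast
  have "q * m \<le> E" using Eqr by simp
  also have "E < index_deg \<alpha>" unfolding E_def using a0 heavy by simp
  also have "\<dots> \<le> m * D" by (rule idx_le)
  finally have "q * m < D * m" by (simp add: mult.commute)
  then have qD: "q < D" by simp
  have dp: "0 < d" using d_pos[OF n2] .
  text \<open>\<open>\<beta>'\<close> has index degree \<open>E\<close> and degree \<open>D + d\<close>, hence weight
    \<open>a\<^sub>0 (D + d) + d E = a\<^sub>0 D + d (index_deg \<alpha>)\<close>.\<close>
  define \<beta>' where "\<beta>' = single m q + single r 1 + single 0 (D + d - q - 1)"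
  have td: "tdeg \<beta>' = D + d" unfolding \<beta>'_def using qD by (simp add: tdeg_add tdeg_single)
  have idx: "index_deg \<beta>' = E" unfolding \<beta>'_def using Eqr by (simp add: wdeg_add wdeg_single)
  have Sb: "keys \<beta>' \<subseteq> {..<n}"
  proof -
    have "keys \<beta>' \<subseteq> keys (single m q) \<union> keys (single r (1::nat)) \<union> keys (single 0 (D + d - q - 1))"
      unfolding \<beta>'_def by (simp add: keys_add_nat)
    also have "\<dots> \<subseteq> {m, r, 0}" by auto
    also have "\<dots> \<subseteq> {..<n}" using m0 rm by auto
    finally show ?thesis .
  qed
  have "wdeg a \<beta>' = a 0 * (D + d) + d * E" using wdeg_eq_index_deg[OF Sb] td idx by simp
  also have "\<dots> = a 0 * D + (d * E + d * a 0)" by (simp add: algebra_simps)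
  also have "d * E + d * a 0 = d * index_deg \<alpha>" unfolding E_def using heavy by (simp add: add_mult_distrib2[symmetric])
  also have "a 0 * D + d * index_deg \<alpha> = wdeg a \<alpha>" using wdeg_eq_index_deg[OF S] unfolding D_def by simp
  finally have "wdeg a \<beta>' = wdeg a \<alpha>" .
  moreover have "tdeg \<alpha> < tdeg \<beta>'" using td dp unfolding D_def by simp
  ultimately show ?thesis using Sb by blast
qed

lemma monomial_in_tcone:
  assumes n2: "1 < n" and S: "keys \<alpha> \<subseteq> {..<n}" and heavy: "a 0 \<le> index_deg \<alpha>"
  shows "(single \<alpha> 1 :: 'k::field mpoly) \<in> tcone n a"
proof -
  obtain \<beta> where \<beta>: "keys \<beta> \<subseteq> {..<n}" "wdeg a \<beta> = wdeg a \<alpha>" "tdeg \<alpha> < tdeg \<beta>"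
    using higher_degree_same_weight[OF assms] by blast
  show ?thesis by (rule monomial_in_tcone_if_binomial[OF S \<beta>(1) \<beta>(2)[symmetric] \<beta>(3)])
qed

lemma a_exchange:
  assumes "1 \<le> i" "i < n" "j + 1 < n"
  shows "a i + a j = a (i - 1) + a (j + 1)"
proof -
  obtain i' where i': "i = Suc i'" using assms(1) by (cases i) auto
  then show ?thesis using a_lin[of i] a_lin[of j] a_lin[of i'] a_lin[of "j + 1"] assms
    by (simp add: algebra_simps)
qed

lemma quadric_in_tcone:
  assumes ij: "1 \<le> i" "i \<le> j" "j + 1 < n"
  shows "\<exists>f :: 'k::field mpoly. f \<in> tcone n a \<and> f \<noteq> 0 \<and> lm f = e i + e j"
proof -
  define \<mu> where "\<mu> = e i + e j"
  define \<nu> where "\<nu> = e (i - 1) + e (j + 1)"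
  have lookup\<mu>: "lookup \<mu> k = (if k = i then 1 else 0) + (if k = j then 1 else 0)" for k
    unfolding \<mu>_def by (simp add: lookup_add lookup_single when_def)
  have lookup\<nu>: "lookup \<nu> k = (if k = i - 1 then 1 else 0) + (if k = j + 1 then 1 else 0)" for k
    unfolding \<nu>_def by (simp add: lookup_add lookup_single when_def)
  have "revlex_less \<nu> \<mu>" unfolding revlex_less_def
  proof (intro exI conjI allI impI)
    show "lookup \<mu> (j + 1) < lookup \<nu> (j + 1)" using lookup\<mu>[of "j + 1"] lookup\<nu>[of "j + 1"] ij by simp
    fix k assume "j + 1 < k"
    then show "lookup \<mu> k = lookup \<nu> k" using lookup\<mu>[of k] lookup\<nu>[of k] ij by simp
  qed
  moreover have t\<mu>: "tdeg \<mu> = 2" and t\<nu>: "tdeg \<nu> = 2"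
    unfolding \<mu>_def \<nu>_def by (simp_all add: tdeg_add tdeg_single)
  ultimately have less: "drl_less \<nu> \<mu>" by (simp add: drl_less_revlex)
  then have ne: "\<mu> \<noteq> \<nu>" using drl_irrefl by auto
  have S\<mu>: "keys \<mu> \<subseteq> {..<n}" and S\<nu>: "keys \<nu> \<subseteq> {..<n}"
    unfolding \<mu>_def \<nu>_def using ij by (auto simp: keys_add_nat)
  have eq: "wdeg a \<mu> = wdeg a \<nu>"
    using a_exchange[of i j] ij unfolding \<mu>_def \<nu>_def by (simp add: wdeg_add wdeg_single)
  define f :: "'k mpoly" where "f = single \<mu> 1 - single \<nu> 1"
  have "f \<in> tcone n a"
    unfolding f_def by (rule homogeneous_binomial_in_tcone[OF S\<mu> S\<nu> ne eq]) (simp add: t\<mu> t\<nu>)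
  moreover have "f \<noteq> 0" and "lm f = \<mu>"
    using toric_binomial(3,4)[OF S\<mu> S\<nu> ne eq, where 'k='k] less unfolding f_def[symmetric]
    by (auto intro: lm_eqI)
  ultimately show ?thesis unfolding \<mu>_def by blast
qed

lemma eq_0_if_wdeg_eq_0: "keys \<beta> \<subseteq> {..<n} \<Longrightarrow> wdeg a \<beta> = 0 \<Longrightarrow> \<beta> = 0"
  using tdeg_le_wdeg[of \<beta>] tdeg_eq_0[of \<beta>] by simp

lemma eq_unit_if_wdeg_eq_a:
  assumes i: "i < n" and S: "keys \<beta> \<subseteq> {..<n}" and w: "wdeg a \<beta> = a i"
  shows "\<beta> = e i"
proof (cases "lookup \<beta> i = 0")
  case False
  have dv: "mdvd (e i) \<beta>" unfolding mdvd_def using False by (simp add: lookup_single when_def)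
  define \<beta>'' where "\<beta>'' = \<beta> - e i"
  have be: "\<beta>'' + e i = \<beta>" unfolding \<beta>''_def by (rule mdvd_diff_add[OF dv])
  have S'': "keys \<beta>'' \<subseteq> {..<n}" using S keys_diff_subset[of \<beta> "e i"] unfolding \<beta>''_def by blast
  have "wdeg a \<beta>'' + a i = a i" using w be wdeg_add[of a \<beta>'' "e i"] by (simp add: wdeg_single)
  then have "\<beta>'' = 0" using eq_0_if_wdeg_eq_0[OF S''] by simp
  then show ?thesis using be by simp
next
  case True
  define inv where "inv = the_inv_into {..<n} a"
  define c where "c b = lookup \<beta> (inv b)" for b
  have A: "a ` {..<n} - {a i} = a ` ({..<n} - {i})"
    using a_inj i by (auto simp: inj_on_def)
  have "(\<Sum>b\<in>a ` {..<n} - {a i}. c b * b) = (\<Sum>k\<in>{..<n} - {i}. c (a k) * a k)"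
    unfolding A by (rule sum.reindex_cong[where l=a]) (use a_inj in \<open>auto simp: inj_on_def\<close>)
  also have "\<dots> = (\<Sum>k\<in>{..<n} - {i}. lookup \<beta> k * a k)"
    by (rule sum.cong) (simp_all add: c_def inv_def the_inv_into_f_f[OF a_inj])
  also have "\<dots> = (\<Sum>k<n. lookup \<beta> k * a k)"
    using True i by (intro sum.mono_neutral_left) auto
  also have "\<dots> = a i" using w wdeg_superset[of "{..<n}" \<beta> a] S by simp
  finally have "a i \<in> sg_generated (a ` {..<n} - {a i})"
    unfolding sg_generated_def by (metis (mono_tags, lifting) mem_Collect_eq)
  then show ?thesis using mingen[OF i] by simp
qed

lemma two_le_tdeg_keys_tcone:
  assumes p: "(p :: 'k::field mpoly) \<in> tcone n a" and \<alpha>: "\<alpha> \<in> keys p"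
  shows "2 \<le> tdeg \<alpha>"
proof (rule ccontr)
  assume small: "\<not> 2 \<le> tdeg \<alpha>"
  have S: "keys \<alpha> \<subseteq> {..<n}" using tcone_in_S[OF p] \<alpha> by (rule in_S_keys)
  have "\<beta> = \<alpha>" if S\<beta>: "keys \<beta> \<subseteq> {..<n}" and w: "wdeg a \<beta> = wdeg a \<alpha>" for \<beta>
  proof (cases "tdeg \<alpha> = 0")
    case True
    then have "\<alpha> = 0" by (simp add: tdeg_eq_0)
    then show ?thesis using eq_0_if_wdeg_eq_0[OF S\<beta>] w by simp
  next
    case False
    then have "tdeg \<alpha> = 1" using small by simp
    then obtain i where i: "i \<in> keys \<alpha>" "\<alpha> = e i" using tdeg_eq_1_imp_single by blast
    then have "i < n" using S by auto
    then show ?thesis using eq_unit_if_wdeg_eq_a[OF _ S\<beta>] w i(2) by (simp add: wdeg_single)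
  qed
  then have "lookup p \<alpha> = 0" by (rule lookup_tcone_eq_0_if_weight_unique[OF S p])
  then show False using \<alpha> by (simp add: in_keys_iff)
qed

definition inner_deg :: "(nat \<Rightarrow>\<^sub>0 nat) \<Rightarrow> nat" where
  "inner_deg \<gamma> = (\<Sum>k\<in>{1..<m}. lookup \<gamma> k)"

definition inner_index_deg :: "(nat \<Rightarrow>\<^sub>0 nat) \<Rightarrow> nat" where
  "inner_index_deg \<gamma> = (\<Sum>k\<in>{1..<m}. lookup \<gamma> k * k)"

lemma tdeg_split:
  assumes n2: "1 < n" and S: "keys \<gamma> \<subseteq> {..<n}"
  shows "tdeg \<gamma> = lookup \<gamma> 0 + inner_deg \<gamma> + lookup \<gamma> m"
proof -
  have n: "n = Suc m" using n2 by simp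
  have "tdeg \<gamma> = (\<Sum>k<Suc m. lookup \<gamma> k)" using tdeg_sum[OF S] n by simp
  also have "\<dots> = lookup \<gamma> 0 + inner_deg \<gamma> + lookup \<gamma> m" unfolding inner_deg_def using n2 by (intro sum_lessThan_Suc_split) simp
  finally show ?thesis .
qed

lemma index_deg_split:
  assumes n2: "1 < n" and S: "keys \<gamma> \<subseteq> {..<n}"
  shows "index_deg \<gamma> = inner_index_deg \<gamma> + lookup \<gamma> m * m"
proof -
  have n: "n = Suc m" using n2 by simp
  have "index_deg \<gamma> = (\<Sum>k<Suc m. lookup \<gamma> k * k)" using index_deg_sum[OF S] n by simp
  also have "\<dots> = lookup \<gamma> 0 * 0 + inner_index_deg \<gamma> + lookup \<gamma> m * m" unfolding inner_index_deg_def using n2 by (intro sum_lessThan_Suc_split) simp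
  finally show ?thesis by simp
qed

lemma inner_deg_cases:
  assumes "inner_deg \<gamma> \<le> 1"
  shows "(\<forall>k\<in>{1..<m}. lookup \<gamma> k = 0) \<or> (\<exists>j\<in>{1..<m}. lookup \<gamma> j = 1 \<and> (\<forall>k\<in>{1..<m}. k \<noteq> j \<longrightarrow> lookup \<gamma> k = 0))"
proof (cases "\<forall>k\<in>{1..<m}. lookup \<gamma> k = 0")
  case False
  then obtain j where j: "j \<in> {1..<m}" "lookup \<gamma> j \<noteq> 0" by blast
  have fin: "finite {1..<m}" by simp
  have "inner_deg \<gamma> = lookup \<gamma> j + (\<Sum>k\<in>{1..<m} - {j}. lookup \<gamma> k)"
    unfolding inner_deg_def using sum.remove[OF fin j(1)] by simp
  then have l1: "lookup \<gamma> j = 1" and r0: "(\<Sum>k\<in>{1..<m} - {j}. lookup \<gamma> k) = 0" using assms j(2) by linarith+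
  have "\<forall>k\<in>{1..<m}. k \<noteq> j \<longrightarrow> lookup \<gamma> k = 0" using r0 by simp
  then show ?thesis using l1 j(1) by blast
qed simp

lemma inner_deg_lookup:
  assumes "inner_deg \<gamma> \<le> 1" "k \<in> {1..<m}"
  shows "lookup \<gamma> k = (if k = inner_index_deg \<gamma> then 1 else 0)"
proof -
  from inner_deg_cases[OF assms(1)] show ?thesis
  proof
    assume all0: "\<forall>k\<in>{1..<m}. lookup \<gamma> k = 0"
    then have "inner_index_deg \<gamma> = 0" unfolding inner_index_deg_def by simp
    then show ?thesis using all0 assms(2) by auto
  next
    assume "\<exists>j\<in>{1..<m}. lookup \<gamma> j = 1 \<and> (\<forall>k\<in>{1..<m}. k \<noteq> j \<longrightarrow> lookup \<gamma> k = 0)"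
    then obtain j where j: "j \<in> {1..<m}" "lookup \<gamma> j = 1" "\<forall>k\<in>{1..<m}. k \<noteq> j \<longrightarrow> lookup \<gamma> k = 0" by blast
    have fin: "finite {1..<m}" by simp
    have "inner_index_deg \<gamma> = lookup \<gamma> j * j + (\<Sum>k\<in>{1..<m} - {j}. lookup \<gamma> k * k)"
      unfolding inner_index_deg_def using sum.remove[OF fin j(1)] by simp
    also have "(\<Sum>k\<in>{1..<m} - {j}. lookup \<gamma> k * k) = 0" using j(3) by simp
    finally have "inner_index_deg \<gamma> = j" using j(2) by simp
    then show ?thesis using j assms(2) by auto
  qed
qed

lemma inner_index_deg_less:
  assumes "inner_deg \<gamma> \<le> 1" "1 < n" shows "inner_index_deg \<gamma> < m"
proof -
  from inner_deg_cases[OF assms(1)] show ?thesis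
  proof
    assume all0: "\<forall>k\<in>{1..<m}. lookup \<gamma> k = 0"
    then have "inner_index_deg \<gamma> = 0" unfolding inner_index_deg_def by simp
    then show ?thesis using assms(2) by simp
  next
    assume "\<exists>j\<in>{1..<m}. lookup \<gamma> j = 1 \<and> (\<forall>k\<in>{1..<m}. k \<noteq> j \<longrightarrow> lookup \<gamma> k = 0)"
    then obtain j where j: "j \<in> {1..<m}" "lookup \<gamma> j = 1" by auto
    have "lookup \<gamma> j = (if j = inner_index_deg \<gamma> then 1 else 0)" by (rule inner_deg_lookup[OF assms(1) j(1)])
    then have "j = inner_index_deg \<gamma>" using j(2) by (cases "j = inner_index_deg \<gamma>") simp_all
    then show ?thesis using j(1) by simp
  qed
qed

lemma inner_deg_eq:
  assumes "inner_deg \<gamma> \<le> 1" shows "inner_deg \<gamma> = (if inner_index_deg \<gamma> = 0 then 0 else 1)"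
proof -
  from inner_deg_cases[OF assms(1)] show ?thesis
  proof
    assume all0: "\<forall>k\<in>{1..<m}. lookup \<gamma> k = 0"
    then show ?thesis unfolding inner_index_deg_def inner_deg_def by simp
  next
    assume "\<exists>j\<in>{1..<m}. lookup \<gamma> j = 1 \<and> (\<forall>k\<in>{1..<m}. k \<noteq> j \<longrightarrow> lookup \<gamma> k = 0)"
    then obtain j where j: "j \<in> {1..<m}" "lookup \<gamma> j = 1" "\<forall>k\<in>{1..<m}. k \<noteq> j \<longrightarrow> lookup \<gamma> k = 0" by blast
    have fin: "finite {1..<m}" by simp
    have "inner_deg \<gamma> = lookup \<gamma> j + (\<Sum>k\<in>{1..<m} - {j}. lookup \<gamma> k)"
      unfolding inner_deg_def using sum.remove[OF fin j(1)] by simp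
    then have m1: "inner_deg \<gamma> = 1" using j by simp
    have "inner_index_deg \<gamma> = lookup \<gamma> j * j + (\<Sum>k\<in>{1..<m} - {j}. lookup \<gamma> k * k)"
      unfolding inner_index_deg_def using sum.remove[OF fin j(1)] by simp
    then have "inner_index_deg \<gamma> = j" using j by simp
    then show ?thesis using m1 j(1) by simp
  qed
qed

lemma monomial_eq_by_degrees:
  assumes n2: "1 < n" and Sa: "keys \<alpha> \<subseteq> {..<n}" and Sb: "keys \<beta> \<subseteq> {..<n}"
    and td: "tdeg \<alpha> = tdeg \<beta>" and Weq: "index_deg \<alpha> = index_deg \<beta>" and ma: "inner_deg \<alpha> \<le> 1" and mb: "inner_deg \<beta> \<le> 1"
  shows "\<alpha> = \<beta>"
proof -
  have m0: "0 < m" using n2 by simp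
  have wa: "index_deg \<alpha> = inner_index_deg \<alpha> + lookup \<alpha> m * m" by (rule index_deg_split[OF n2 Sa])
  have wb: "index_deg \<beta> = inner_index_deg \<beta> + lookup \<beta> m * m" by (rule index_deg_split[OF n2 Sb])
  have la: "inner_index_deg \<alpha> < m" by (rule inner_index_deg_less[OF ma n2])
  have lb: "inner_index_deg \<beta> < m" by (rule inner_index_deg_less[OF mb n2])
  have "index_deg \<alpha> mod m = inner_index_deg \<alpha>" using wa la by simp
  moreover have "index_deg \<beta> mod m = inner_index_deg \<beta>" using wb lb by simp
  ultimately have Mweq: "inner_index_deg \<alpha> = inner_index_deg \<beta>" using Weq by simp
  have "index_deg \<alpha> div m = lookup \<alpha> m" using wa la m0 by simp
  moreover have "index_deg \<beta> div m = lookup \<beta> m" using wb lb m0 by simp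
  ultimately have lkm: "lookup \<alpha> m = lookup \<beta> m" using Weq by simp
  have midv: "inner_deg \<alpha> = inner_deg \<beta>" using inner_deg_eq[OF ma] inner_deg_eq[OF mb] Mweq by simp
  have lk0: "lookup \<alpha> 0 = lookup \<beta> 0" using tdeg_split[OF n2 Sa] tdeg_split[OF n2 Sb] td midv lkm by simp
  show ?thesis
  proof (rule poly_mapping_eqI)
    fix k show "lookup \<alpha> k = lookup \<beta> k"
    proof (cases "k < n")
      case False
      then have "k \<notin> keys \<alpha>" "k \<notin> keys \<beta>" using Sa Sb by auto
      then show ?thesis by (simp add: in_keys_iff)
    next
      case True
      then have "k = 0 \<or> k \<in> {1..<m} \<or> k = m" by auto
      then show ?thesis using lk0 lkm inner_deg_lookup[OF ma, of k] inner_deg_lookup[OF mb, of k] Mweq by auto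
    qed
  qed
qed

lemma inner_deg_le_1:
  assumes nd: "\<And>i j. 1 \<le> i \<Longrightarrow> i \<le> j \<Longrightarrow> j + 1 < n \<Longrightarrow> \<not> mdvd (e i + e j) \<gamma>"
  shows "inner_deg \<gamma> \<le> 1"
proof (rule ccontr)
  assume "\<not> inner_deg \<gamma> \<le> 1"
  then have m2: "2 \<le> inner_deg \<gamma>" by simp
  then have "inner_deg \<gamma> \<noteq> 0" by simp
  then obtain i where i: "i \<in> {1..<m}" "lookup \<gamma> i \<noteq> 0" unfolding inner_deg_def by (metis sum.neutral)
  have fin: "finite {1..<m}" by simp
  have sp: "inner_deg \<gamma> = lookup \<gamma> i + (\<Sum>k\<in>{1..<m} - {i}. lookup \<gamma> k)"
    unfolding inner_deg_def using sum.remove[OF fin i(1)] by simp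
  have mdv: "mdvd (e i + e j) \<gamma>" if "lookup \<gamma> i \<ge> (if i = j then 2 else 1)" "lookup \<gamma> j \<ge> 1" for j
    unfolding mdvd_def using that by (auto simp: lookup_add lookup_single when_def)
  show False
  proof (cases "lookup \<gamma> i \<ge> 2")
    case True
    then have "mdvd (e i + e i) \<gamma>" using mdv[of i] by simp
    moreover have "i + 1 < n" using i(1) by auto
    moreover have "1 \<le> i" using i(1) by auto
    ultimately show False using nd[of i i] by blast
  next
    case False
    then have "(\<Sum>k\<in>{1..<m} - {i}. lookup \<gamma> k) \<noteq> 0" using sp m2 by linarith
    then obtain j where j: "j \<in> {1..<m} - {i}" "lookup \<gamma> j \<noteq> 0" by (metis sum.neutral)
    have "mdvd (e i + e j) \<gamma>" using mdv[of j] i j by auto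
    moreover have "mdvd (e j + e i) \<gamma>" using mdv[of j] i j by (auto simp: add.commute)
    moreover have "i + 1 < n" "j + 1 < n" "1 \<le> i" "1 \<le> j" using i(1) j(1) by auto
    ultimately show False
    proof (cases "i \<le> j")
      case True
      then show False using nd[of i j] \<open>mdvd (e i + e j) \<gamma>\<close> \<open>j + 1 < n\<close> \<open>1 \<le> i\<close> by blast
    next
      case False
      then have "j \<le> i" by simp
      then show False using nd[of j i] \<open>mdvd (e j + e i) \<gamma>\<close> \<open>i + 1 < n\<close> \<open>1 \<le> j\<close> by blast
    qed
  qed
qed

lemma index_deg_if_concentrated_at_m:
  assumes n2: "1 < n" and S: "keys \<gamma> \<subseteq> {..<n}" and z: "\<And>k. k < m \<Longrightarrow> lookup \<gamma> k = 0"
  shows "index_deg \<gamma> = m * tdeg \<gamma>"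
proof -
  have "index_deg \<gamma> = (\<Sum>k<n. lookup \<gamma> k * k)" by (rule index_deg_sum[OF S])
  also have "\<dots> = (\<Sum>k<n. lookup \<gamma> k * m)"
  proof (rule sum.cong)
    fix k assume "k \<in> {..<n}"
    then have "k < m \<or> k = m" by auto
    then show "lookup \<gamma> k * k = lookup \<gamma> k * m" using z by auto
  qed simp
  also have "\<dots> = m * tdeg \<gamma>" using S by (simp add: tdeg_sum sum_distrib_left mult.commute)
  finally show ?thesis .
qed

lemma support_one_index_and_m:
  assumes n2: "1 < n" and S: "keys \<gamma> \<subseteq> {..<n}" and md: "inner_deg \<gamma> \<le> 1" and z0: "lookup \<gamma> 0 = 0"
    and t: "1 \<le> tdeg \<gamma>"
  obtains i where "i < n" "1 \<le> lookup \<gamma> i" "\<And>k. k < m \<Longrightarrow> k \<noteq> i \<Longrightarrow> lookup \<gamma> k = 0"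
    "i \<noteq> m \<Longrightarrow> lookup \<gamma> i = 1"
proof (cases "inner_index_deg \<gamma> = 0")
  case True
  have "inner_deg \<gamma> = 0" using inner_deg_eq[OF md] True by simp
  then have "lookup \<gamma> m \<ge> 1" using tdeg_split[OF n2 S] z0 t by simp
  moreover have "lookup \<gamma> k = 0" if "k < m" for k
  proof (cases "k = 0")
    case False
    then have "k \<in> {1..<m}" using that by simp
    then show ?thesis using inner_deg_lookup[OF md] True by simp
  qed (simp add: z0)
  ultimately show ?thesis using that[of m] n2 by simp
next
  case False
  define j where "j = inner_index_deg \<gamma>"
  have jm: "j \<in> {1..<m}" using False inner_index_deg_less[OF md n2] unfolding j_def by simp
  have "lookup \<gamma> j = 1" using inner_deg_lookup[OF md jm] unfolding j_def by simp
  moreover have "lookup \<gamma> k = 0" if "k < m" "k \<noteq> j" for k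
  proof (cases "k = 0")
    case False
    then have "k \<in> {1..<m}" using that by simp
    then show ?thesis using inner_deg_lookup[OF md] that(2) unfolding j_def by simp
  qed (simp add: z0)
  ultimately show ?thesis using that[of j] jm n2 by auto
qed

lemma index_deg_eq_with_index:
  assumes n2: "1 < n" and S: "keys \<gamma> \<subseteq> {..<n}" and md: "inner_deg \<gamma> \<le> 1" and z0: "lookup \<gamma> 0 = 0"
    and t: "1 \<le> tdeg \<gamma>"
  shows "\<exists>i<n. lookup \<gamma> i \<ge> 1 \<and> index_deg \<gamma> = i + m * (tdeg \<gamma> - 1)"
proof -
  obtain i where i: "i < n" "lookup \<gamma> i \<ge> 1" "\<And>k. k < m \<Longrightarrow> k \<noteq> i \<Longrightarrow> lookup \<gamma> k = 0"
    "i \<noteq> m \<Longrightarrow> lookup \<gamma> i = 1"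
    using support_one_index_and_m[OF assms] by blast
  define \<gamma>' where "\<gamma>' = \<gamma> - e i"
  have "mdvd (e i) \<gamma>" unfolding mdvd_def using i(2) by (simp add: lookup_single when_def)
  then have \<gamma>: "\<gamma>' + e i = \<gamma>" unfolding \<gamma>'_def by (rule mdvd_diff_add)
  have S': "keys \<gamma>' \<subseteq> {..<n}" using S keys_diff_subset[of \<gamma> "e i"] unfolding \<gamma>'_def by blast
  have "lookup \<gamma>' k = 0" if "k < m" for k
  proof (cases "k = i")
    case True
    then show ?thesis using i(4) that unfolding \<gamma>'_def by (simp add: lookup_minus)
  next
    case False
    then show ?thesis using i(3)[OF that] unfolding \<gamma>'_def by (simp add: lookup_minus lookup_single_not_eq)
  qed
  then have "index_deg \<gamma>' = m * tdeg \<gamma>'" by (rule index_deg_if_concentrated_at_m[OF n2 S'])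
  moreover have "index_deg \<gamma> = index_deg \<gamma>' + i" using \<gamma>[symmetric] by (simp add: wdeg_add wdeg_single)
  moreover have "tdeg \<gamma> = tdeg \<gamma>' + 1" using \<gamma>[symmetric] by (simp add: tdeg_add tdeg_single)
  ultimately show ?thesis using i(1,2) by auto
qed

lemma tcone_eq_0_if_n_eq_1:
  assumes n1: "n = 1" and p: "(p :: 'k::field mpoly) \<in> tcone n a"
  shows "p = 0"
proof (rule poly_mapping_eqI)
  fix \<alpha>
  show "lookup p \<alpha> = lookup 0 \<alpha>"
  proof (cases "keys \<alpha> \<subseteq> {..<n}")
    case False
    then have "\<alpha> \<notin> keys p" using tcone_in_S[OF p] in_S_keys by blast
    then show ?thesis by (simp add: in_keys_iff)
  next
    case S: True
    have "\<beta> = \<alpha>" if S\<beta>: "keys \<beta> \<subseteq> {..<n}" and w: "wdeg a \<beta> = wdeg a \<alpha>" for \<beta>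
    proof (rule poly_mapping_eqI)
      fix k
      have "index_deg \<beta> = 0" "index_deg \<alpha> = 0" using index_deg_sum[OF S\<beta>] index_deg_sum[OF S] n1 by simp_all
      then have "a 0 * tdeg \<beta> = a 0 * tdeg \<alpha>" using w wdeg_eq_index_deg[OF S\<beta>] wdeg_eq_index_deg[OF S] by simp
      then have "lookup \<beta> 0 = lookup \<alpha> 0" using a_pos[OF n_pos] tdeg_sum[OF S\<beta>] tdeg_sum[OF S] n1 by simp
      moreover have "k \<notin> keys \<beta> \<and> k \<notin> keys \<alpha>" if "k \<noteq> 0" using S\<beta> S n1 that by auto
      ultimately show "lookup \<beta> k = lookup \<alpha> k" by (cases "k = 0") (auto simp: in_keys_iff)
    qed
    then show ?thesis using lookup_tcone_eq_0_if_weight_unique[OF S p] by simp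
  qed
qed
end

section \<open>Minimality of the reduced Groebner basis\<close>

locale reduced_tangent_basis = arith_semigroup +
  fixes G :: "'k::field mpoly set"
  assumes reduced: "is_reduced_groebner_basis (tcone n a) G"
begin

lemma basis_groebner: "is_groebner_basis (tcone n a) G"
  and basis_subset: "G \<subseteq> tcone n a"
  and basis_nonzero: "0 \<notin> G"
  and basis_lm_dvd: "(f :: 'k mpoly) \<in> tcone n a \<Longrightarrow> f \<noteq> 0 \<Longrightarrow> \<exists>g\<in>G. mdvd (lm g) (lm f)"
  and basis_lc: "g \<in> G \<Longrightarrow> lc g = 1"
  and basis_reduced: "g \<in> G \<Longrightarrow> g' \<in> G \<Longrightarrow> g' \<noteq> g \<Longrightarrow> \<alpha> \<in> keys g \<Longrightarrow> \<not> mdvd (lm g') \<alpha>"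
  using reduced unfolding is_reduced_groebner_basis_def is_groebner_basis_def by blast+

lemma basis_generates: "ideal_gen n G = tcone n a"
  using groebner_basis_generates[OF tcone_is_ideal tcone_in_S basis_groebner basis_lc] .

lemma lm_in_keys_basis: "g \<in> G \<Longrightarrow> lm g \<in> keys g"
  using basis_nonzero by (metis lm_in_keys)

lemma keys_basis_subset: "g \<in> G \<Longrightarrow> \<alpha> \<in> keys g \<Longrightarrow> keys \<alpha> \<subseteq> {..<n}"
  using basis_subset tcone_in_S in_S_keys by blast

lemma two_le_tdeg_keys_basis: "g \<in> G \<Longrightarrow> \<alpha> \<in> keys g \<Longrightarrow> 2 \<le> tdeg \<alpha>"
  using basis_subset two_le_tdeg_keys_tcone by blast

lemma lm_notin_keys_other:
  assumes "g \<in> G" "x \<in> G" "x \<noteq> g"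
  shows "lm g \<notin> keys x"
  using basis_reduced[of x g "lm g"] assms mdvd_refl by blast

lemma one_less_n:
  assumes "g \<in> G" shows "1 < n"
proof (rule ccontr)
  assume "\<not> 1 < n"
  then have "n = 1" using n_pos by simp
  then have "g = 0" using tcone_eq_0_if_n_eq_1 basis_subset assms by blast
  then show False using basis_nonzero assms by simp
qed

lemma quadric_lm_in_basis:
  assumes ij: "1 \<le> i" "i \<le> j" "j + 1 < n"
  shows "\<exists>g\<in>G. lm g = e i + e j"
proof -
  obtain f :: "'k mpoly" where f: "f \<in> tcone n a" "f \<noteq> 0" "lm f = e i + e j"
    using quadric_in_tcone[OF ij] by blast
  obtain g where g: "g \<in> G" "mdvd (lm g) (e i + e j)" using basis_lm_dvd[OF f(1,2)] f(3) by auto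
  have "2 \<le> tdeg (lm g)" using two_le_tdeg_keys_basis lm_in_keys_basis g(1) by blast
  moreover have "tdeg (e i + e j) = 2" by (simp add: tdeg_add tdeg_single)
  ultimately have "lm g = e i + e j" using mdvd_eq_if_tdeg_le[OF g(2)] by simp
  then show ?thesis using g(1) by blast
qed

text \<open>By reducedness, no leading monomial \<open>x\<^sub>i x\<^sub>j\<close> of a quadric divides such a monomial.\<close>

lemma inner_deg_keys_basis:
  assumes x: "x \<in> G" and \<nu>: "\<nu> \<in> keys x" and deg: "3 \<le> tdeg \<nu>"
  shows "inner_deg \<nu> \<le> 1"
proof (rule inner_deg_le_1)
  fix i j assume ij: "1 \<le> i" "i \<le> j" "j + 1 < n"
  obtain g where g: "g \<in> G" "lm g = e i + e j" using quadric_lm_in_basis[OF ij] by blast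
  show "\<not> mdvd (e i + e j) \<nu>"
  proof (cases "x = g")
    case True
    have "tdeg \<nu> \<le> tdeg (lm x)" using tdeg_le_tdeg_lm \<nu> by blast
    then show ?thesis using True g(2) deg by (simp add: tdeg_add tdeg_single)
  next
    case False
    then show ?thesis using basis_reduced[OF x g(1)] \<nu> g(2) by metis
  qed
qed

lemma not_in_ideal_others_if_deg_2:
  assumes gG: "g \<in> G" and deg: "tdeg (lm g) = 2"
  shows "g \<notin> ideal_gen n (G - {g})"
proof
  assume gI: "g \<in> ideal_gen n (G - {g})"
  have "coeff_sum {lm g} g = 0"
  proof (rule ideal_gen_coeff_sum_zero[OF _ gI])
    fix x and \<gamma> :: "nat \<Rightarrow>\<^sub>0 nat" assume x: "x \<in> G - {g}" and "keys \<gamma> \<subseteq> {..<n}"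
    have "keys x \<inter> {\<delta>. \<gamma> + \<delta> \<in> {lm g}} = {}"
    proof (intro equals0I)
      fix \<delta> assume \<delta>: "\<delta> \<in> keys x \<inter> {\<delta>. \<gamma> + \<delta> \<in> {lm g}}"
      then have sum: "\<gamma> + \<delta> = lm g" by simp
      moreover have "2 \<le> tdeg \<delta>" using two_le_tdeg_keys_basis x \<delta> by blast
      ultimately have "tdeg \<gamma> = 0" using deg tdeg_add[of \<gamma> \<delta>] by simp
      then have "\<gamma> = 0" by (simp add: tdeg_eq_0)
      then show False using lm_notin_keys_other[OF gG] x \<delta> sum by auto
    qed
    then show "coeff_sum {\<delta>. \<gamma> + \<delta> \<in> {lm g}} x = 0" by (rule coeff_sum_empty)
  qed
  then show False using basis_lc[OF gG] by (simp add: coeff_sum_singleton lc_def)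
qed

context
  fixes g assumes gG: "g \<in> G" and deg: "3 \<le> tdeg (lm g)"
begin

lemma keys_lm_subset: "keys (lm g) \<subseteq> {..<n}"
  using keys_basis_subset gG lm_in_keys_basis by blast

lemma keys_basis_in_fibre_of_lm:
  assumes x: "x \<in> G" and \<nu>: "\<nu> \<in> keys x" and \<nu>C: "\<nu> \<in> fibre n a (tdeg (lm g)) (wdeg a (lm g))"
  shows "\<nu> = lm g"
proof -
  have S: "keys \<nu> \<subseteq> {..<n}" and t\<nu>: "tdeg \<nu> = tdeg (lm g)" and w\<nu>: "wdeg a \<nu> = wdeg a (lm g)"
    using \<nu>C unfolding fibre_def by auto
  have "a 0 * tdeg (lm g) + d * index_deg \<nu> = a 0 * tdeg (lm g) + d * index_deg (lm g)"
    using wdeg_eq_index_deg[OF S] wdeg_eq_index_deg[OF keys_lm_subset] t\<nu> w\<nu> by metis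
  then have "index_deg \<nu> = index_deg (lm g)" using d_pos[OF one_less_n[OF gG]] by simp
  moreover have "inner_deg \<nu> \<le> 1" using inner_deg_keys_basis[OF x \<nu>] t\<nu> deg by simp
  moreover have "inner_deg (lm g) \<le> 1"
    using inner_deg_keys_basis[OF gG lm_in_keys_basis[OF gG]] deg by simp
  ultimately show ?thesis using monomial_eq_by_degrees[OF one_less_n[OF gG] S keys_lm_subset] t\<nu> by simp
qed

lemma coeff_sum_fibre_of_lm: "coeff_sum (fibre n a (tdeg (lm g)) (wdeg a (lm g))) g = 1"
proof -
  have "keys g \<inter> fibre n a (tdeg (lm g)) (wdeg a (lm g)) = {lm g}"
  proof
    show "keys g \<inter> fibre n a (tdeg (lm g)) (wdeg a (lm g)) \<subseteq> {lm g}"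
      using keys_basis_in_fibre_of_lm[OF gG] by blast
    show "{lm g} \<subseteq> keys g \<inter> fibre n a (tdeg (lm g)) (wdeg a (lm g))"
      using lm_in_keys_basis[OF gG] keys_lm_subset by (simp add: fibre_def)
  qed
  then show ?thesis using basis_lc[OF gG] unfolding coeff_sum_def lc_def by simp
qed

lemma a0_le_index_deg_lm: "a 0 \<le> index_deg (lm g)"
proof (rule ccontr)
  assume "\<not> a 0 \<le> index_deg (lm g)"
  then have "deg_bound n a (tdeg (lm g)) (wdeg a (lm g))"
    using deg_bound_of_index_deg[OF keys_lm_subset] by simp
  then have "coeff_sum (fibre n a (tdeg (lm g)) (wdeg a (lm g))) g = 0"
    using coeff_sum_fibre_tcone basis_subset gG by blast
  then show False using coeff_sum_fibre_of_lm by simp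
qed

text \<open>Otherwise \<open>lm g / x\<^sub>i\<close> would lie in the tangent cone,
  so some leading monomial of the basis would properly divide \<open>lm g\<close>.\<close>

lemma index_deg_lm_less:
  assumes i: "i < n" "1 \<le> lookup (lm g) i"
  shows "index_deg (lm g) < a 0 + i"
proof (rule ccontr)
  assume "\<not> index_deg (lm g) < a 0 + i"
  define \<mu> where "\<mu> = lm g - e i"
  have "mdvd (e i) (lm g)" unfolding mdvd_def using i(2) by (simp add: lookup_single when_def)
  then have \<mu>: "\<mu> + e i = lm g" unfolding \<mu>_def by (rule mdvd_diff_add)
  have S: "keys \<mu> \<subseteq> {..<n}" using keys_lm_subset keys_diff_subset[of "lm g" "e i"] unfolding \<mu>_def by blast
  have "index_deg (lm g) = index_deg \<mu> + i" using \<mu>[symmetric] by (simp add: wdeg_add wdeg_single)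
  then have "a 0 \<le> index_deg \<mu>" using \<open>\<not> index_deg (lm g) < a 0 + i\<close> by simp
  then have "(single \<mu> 1 :: 'k mpoly) \<in> tcone n a" by (rule monomial_in_tcone[OF one_less_n[OF gG] S])
  moreover have "(single \<mu> 1 :: 'k mpoly) \<noteq> 0" by (metis lookup_single_eq lookup_zero one_neq_zero)
  ultimately obtain g' where "g' \<in> G" "mdvd (lm g') (lm (single \<mu> (1::'k)))" using basis_lm_dvd by blast
  then have g': "g' \<in> G" "mdvd (lm g') \<mu>" using lm_single[of "1::'k" \<mu>] by simp_all
  have "tdeg (lm g') < tdeg (lm g)" using tdeg_le_if_mdvd[OF g'(2)] \<mu>[symmetric] by (simp add: tdeg_add tdeg_single)
  then have "g' \<noteq> g" by auto
  moreover have "mdvd (lm g') (lm g)" using mdvd_trans[OF g'(2) mdvd_diff_left[of "lm g" "e i", folded \<mu>_def]] .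
  ultimately show False using basis_reduced[OF gG g'(1) _ lm_in_keys_basis[OF gG]] by simp
qed

lemma tdeg_lm_bound: "m * (tdeg (lm g) - 1) < a 0"
proof -
  have "lookup (lm g) 0 = 0"
  proof (rule ccontr)
    assume "lookup (lm g) 0 \<noteq> 0"
    then have "index_deg (lm g) < a 0" using index_deg_lm_less[OF n_pos] by simp
    then show False using a0_le_index_deg_lm by simp
  qed
  moreover have "inner_deg (lm g) \<le> 1"
    using inner_deg_keys_basis[OF gG lm_in_keys_basis[OF gG]] deg by simp
  moreover have "1 \<le> tdeg (lm g)" using deg by simp
  ultimately obtain i where "i < n" "1 \<le> lookup (lm g) i" "index_deg (lm g) = i + m * (tdeg (lm g) - 1)"
    using index_deg_eq_with_index[OF one_less_n[OF gG] keys_lm_subset] by blast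
  then show ?thesis using index_deg_lm_less[of i] by simp
qed

text \<open>The fibre of \<open>lm g\<close> meets no other basis element, and every proper shift of it is a
  fibre of small index degree, on which the tangent cone vanishes.\<close>

lemma not_in_ideal_others_if_deg_ge_3: "g \<notin> ideal_gen n (G - {g})"
proof
  let ?C = "fibre n a (tdeg (lm g)) (wdeg a (lm g))"
  assume gI: "g \<in> ideal_gen n (G - {g})"
  have "coeff_sum ?C g = 0"
  proof (rule ideal_gen_coeff_sum_zero[OF _ gI])
    fix x and \<gamma> :: "nat \<Rightarrow>\<^sub>0 nat" assume x: "x \<in> G - {g}" and \<gamma>S: "keys \<gamma> \<subseteq> {..<n}"
    show "coeff_sum {\<delta>. \<gamma> + \<delta> \<in> ?C} x = 0"
    proof (cases "keys x \<inter> {\<delta>. \<gamma> + \<delta> \<in> ?C} = {}")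
      case True then show ?thesis by (rule coeff_sum_empty)
    next
      case False
      then obtain \<delta> where \<delta>: "\<delta> \<in> keys x" "\<gamma> + \<delta> \<in> ?C" by blast
      have "\<gamma> \<noteq> 0"
      proof
        assume "\<gamma> = 0"
        then have "\<delta> = lm g" using keys_basis_in_fibre_of_lm[of x \<delta>] x \<delta> by simp
        then show False using lm_notin_keys_other[OF gG, of x] x \<delta>(1) by simp
      qed
      then have "tdeg \<delta> \<le> tdeg (lm g) - 1" using \<delta>(2) tdeg_eq_0[of \<gamma>] by (auto simp: fibre_def tdeg_add)
      have S: "keys \<delta> \<subseteq> {..<n}" using keys_basis_subset x \<delta>(1) by blast
      have "index_deg \<delta> \<le> m * tdeg \<delta>" by (rule index_deg_le[OF S])
      also have "\<dots> \<le> m * (tdeg (lm g) - 1)" using \<open>tdeg \<delta> \<le> _\<close> by (rule mult_le_mono2)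
      finally have "deg_bound n a (tdeg \<delta>) (wdeg a \<delta>)"
        using tdeg_lm_bound deg_bound_of_index_deg[OF S] by simp
      moreover have "x \<in> tcone n a" using basis_subset x by auto
      ultimately show ?thesis unfolding fibre_shift[OF \<gamma>S \<delta>(2)] by (rule coeff_sum_fibre_tcone)
    qed
  qed
  then show False using coeff_sum_fibre_of_lm by simp
qed

end

lemma basis_not_in_ideal_others:
  assumes "g \<in> G" shows "g \<notin> ideal_gen n (G - {g})"
proof (cases "tdeg (lm g) = 2")
  case True
  then show ?thesis using not_in_ideal_others_if_deg_2[OF assms] by blast
next
  case False
  then have "3 \<le> tdeg (lm g)" using two_le_tdeg_keys_basis[OF assms lm_in_keys_basis[OF assms]] by simp
  then show ?thesis using not_in_ideal_others_if_deg_ge_3[OF assms] by blast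
qed

end

theorem proposition3p1:
  fixes n d :: nat and a :: "nat \<Rightarrow> nat" and G :: "'k::field mpoly set"
  assumes incr: "\<And>i. Suc i < n \<Longrightarrow> a i < a (Suc i)"
    and arith: "\<And>i. Suc i < n \<Longrightarrow> a (Suc i) = a i + d"
    and numsg: "finite (UNIV - sg_generated (a ` {..<n}))"
    and mingen: "\<And>i. i < n \<Longrightarrow> a i \<notin> sg_generated (a ` {..<n} - {a i})"
    and rgb: "is_reduced_groebner_basis
                (tangent_cone_ideal n (toric_ideal n a :: 'k mpoly set)) G"
  shows "minimally_generates n G (tangent_cone_ideal n (toric_ideal n a))"
proof -
  interpret reduced_tangent_basis n d a G
    using assms by unfold_locales
  show ?thesis
    unfolding minimally_generates_def using basis_generates basis_not_in_ideal_others basis_subset by blast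
qed

end
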